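(* Let $H$ be a real Hilbert space. The set $\mathcal A=\{(B,V)\in\mathcal B_s(H)\times\mathcal G(H): B|_{V\times V}\text{ is essentially positive}\}$ is open in $\mathcal B_s(H)\times\mathcal G(H)$; the map $\mathcal A\ni(B,V)\mapsto\mathrm n_-(B|_{V\times V})+\dim\mathrm{Ker}(B|_{V\times V})\in\mathbb N$ is upper semicontinuous; and the map $\mathcal A\ni(B,V)\mapsto\mathrm n_-(B|_{V\times V})\in\mathbb N$ is lower semicontinuous.
   Context: $\mathcal B_s(H)$ is the space of bounded symmetric bilinear forms on $H$, topologized via the operator norm of the representing self-adjoint operators ($B=\langle T\cdot,\cdot\rangle$). $\mathcal G(H)$ is the set of closed subspaces of $H$ with the metric $\mathrm{dist}(X,Y)=\|P_X-P_Y\|$, $P_Z$ the orthogonal projection onto $Z$. A bounded symmetric form on a closed subspace $V$ (a Hilbert space) is essentially positive if its representing operator is $P+K$ with $P$ a self-adjoint isomorphism with $\langle Px,x\rangle>0$ for $x\neq0$ and $K$ compact. $\mathrm n_-$ is the maximal dimension of a negative definite subspace; $\mathrm{Ker}(B|_{V\times V})=\{x\in V: B(x,y)=0\ \forall y\in V\}$. *)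

theory Defs
  imports "HOL-Analysis.Analysis" "HOL-Library.Extended_Nat"
begin

text \<open>The Hilbert space H is a type of class real_inner + complete_space.
 A bounded symmetric bilinear form B is represented by its self-adjoint operator T,
 B(x,y) = inner (T x) y.\<close>

definition selfadjoint :: "('a::real_inner \<Rightarrow>\<^sub>L 'a) \<Rightarrow> bool" where
  "selfadjoint T \<longleftrightarrow> (\<forall>x y. inner (T x) y = inner x (T y))"

definition Bs :: "('a::real_inner \<Rightarrow>\<^sub>L 'a) set" where
  "Bs = {T. selfadjoint T}"

definition Gr :: "'a::real_inner set set" where
  "Gr = {V. subspace V \<and> closed V}"

definition oproj :: "'a::real_inner set \<Rightarrow> 'a \<Rightarrow> 'a" where
  "oproj V x = (THE p. p \<in> V \<and> (\<forall>v\<in>V. inner (x - p) v = 0))"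

definition gdist :: "'a::real_inner set \<Rightarrow> 'a set \<Rightarrow> real" where
  "gdist X Y = onorm (\<lambda>x. oproj X x - oproj Y x)"

text \<open>A metric inducing the product topology on B_s(H) x G(H).\<close>
definition pdist :: "('a::real_inner \<Rightarrow>\<^sub>L 'a) \<times> 'a set \<Rightarrow> ('a \<Rightarrow>\<^sub>L 'a) \<times> 'a set \<Rightarrow> real" where
  "pdist p q = norm (fst p - fst q) + gdist (snd p) (snd q)"

definition linear_on_sub :: "'a::real_vector set \<Rightarrow> ('a \<Rightarrow> 'a) \<Rightarrow> bool" where
  "linear_on_sub V f \<longleftrightarrow> (\<forall>x\<in>V. \<forall>y\<in>V. f (x + y) = f x + f y \<and> (\<forall>a. f (a *\<^sub>R x) = a *\<^sub>R f x))"

definition compact_op_on :: "'a::real_normed_vector set \<Rightarrow> ('a \<Rightarrow> 'a) \<Rightarrow> bool" where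
  "compact_op_on V K \<longleftrightarrow> linear_on_sub V K \<and> K ` V \<subseteq> V \<and>
     compact (closure (K ` (V \<inter> cball 0 1)))"

definition pos_iso_on :: "'a::real_inner set \<Rightarrow> ('a \<Rightarrow> 'a) \<Rightarrow> bool" where
  "pos_iso_on V P \<longleftrightarrow> linear_on_sub V P \<and> P ` V = V \<and>
     (\<exists>c>0. \<forall>x\<in>V. norm (P x) \<le> c * norm x \<and> norm x \<le> c * norm (P x)) \<and>
     (\<forall>x\<in>V. \<forall>y\<in>V. inner (P x) y = inner x (P y)) \<and>
     (\<forall>x\<in>V. x \<noteq> 0 \<longrightarrow> inner (P x) x > 0)"

definition ess_pos :: "('a::real_inner \<Rightarrow>\<^sub>L 'a) \<Rightarrow> 'a set \<Rightarrow> bool" where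
  "ess_pos T V \<longleftrightarrow> (\<exists>P K. pos_iso_on V P \<and> compact_op_on V K \<and>
     (\<forall>x\<in>V. \<forall>y\<in>V. inner (T x) y = inner (P x + K x) y))"

definition edim :: "'a::real_vector set \<Rightarrow> enat" where
  "edim W = Sup {enat (card S) | S. finite S \<and> independent S \<and> S \<subseteq> W}"

definition n_minus :: "('a::real_inner \<Rightarrow>\<^sub>L 'a) \<Rightarrow> 'a set \<Rightarrow> enat" where
  "n_minus T V = Sup {edim W | W. subspace W \<and> W \<subseteq> V \<and> (\<forall>x\<in>W. x \<noteq> 0 \<longrightarrow> inner (T x) x < 0)}"

definition form_ker :: "('a::real_inner \<Rightarrow>\<^sub>L 'a) \<Rightarrow> 'a set \<Rightarrow> 'a set" where
  "form_ker T V = {x \<in> V. \<forall>y\<in>V. inner (T x) y = 0}"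

definition AA :: "(('a::real_inner \<Rightarrow>\<^sub>L 'a) \<times> 'a set) set" where
  "AA = {(T, V). T \<in> Bs \<and> V \<in> Gr \<and> ess_pos T V}"

end

theory Submission
  imports Defs
begin

(*
  The whole argument runs through one quantitative notion, a Garding inequality:
  garding T V S B c M says that on the vectors y of V orthogonal to the finite set S,
      c * |y|^2 - M * (sum over b in B of <y,b>^2)  <=  <T y, y>.

  (1) Essential positivity of T on V is equivalent to a Garding inequality with S = {}
      and some finite B (ess_pos_imp_garding, garding_imp_ess_pos): the compact part of
      P + K is approximated by a finite net, and conversely the finite-rank correction
      is compact and the corrected operator is an isomorphism by a Lax-Milgram argument.
  (2) Garding inequalities survive small perturbations of (T, V), with the constants
      halved/doubled (garding_stable).  This yields openness of the set AA.
  (3) If T is positive definite on V orthogonal to a finite S, then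
      n_minus + dim ker <= card S (index_bound_by_constraints).  With S = B this gives
      finiteness of the indices.
  (4) Upper semicontinuity: from a maximal negative subspace and a basis of the kernel
      one builds S of size n_minus + dim ker such that T is coercive on V orthogonal to S
      (coercive_off_constraints); by (2) and (3) this bound persists nearby.
  (5) Lower semicontinuity: T is uniformly negative on a maximal negative subspace E
      (negative_definite_uniform), and projecting E onto a nearby V' keeps it negative
      for the nearby T' and does not lower its dimension.
*)

text \<open>This is the variational core of both the orthogonality of
  closest points and of the radical lemma for semidefinite forms.\<close>
lemma quadratic_nonneg_imp_linear_zero:
  fixes a b :: real
  assumes nonneg: "\<And>t. 0 \<le> t * a + t\<^sup>2 * b"
  shows "a = 0"
proof (rule ccontr)
  assume "a \<noteq> 0"
  define t where "t = - a / (\<bar>b\<bar> + 1)"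
  have pos: "\<bar>b\<bar> + 1 > 0" by simp
  have ta: "t * (\<bar>b\<bar> + 1) = - a" using pos by (simp add: t_def)
  have "(t * a + t\<^sup>2 * b) * (\<bar>b\<bar> + 1)\<^sup>2
      = (t * (\<bar>b\<bar> + 1)) * a * (\<bar>b\<bar> + 1) + (t * (\<bar>b\<bar> + 1))\<^sup>2 * b"
    by (simp add: power2_eq_square algebra_simps)
  also have "\<dots> = a\<^sup>2 * (b - \<bar>b\<bar> - 1)" unfolding ta by (simp add: power2_eq_square algebra_simps)
  also have "\<dots> < 0" using \<open>a \<noteq> 0\<close> by (intro mult_pos_neg) auto
  finally show False using nonneg[of t] by (metis not_le mult_nonneg_nonneg zero_le_power2)
qed

lemma inverse_Suc_tendsto_zero: "(\<lambda>n::nat. 1 / (real n + 1)) \<longlonglongrightarrow> 0"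
  using LIMSEQ_inverse_real_of_nat by (simp add: inverse_eq_divide add.commute)

text \<open>A minimizing sequence for the distance from x to a subspace V is Cauchy: by the
  parallelogram law, since midpoints of its members stay in V.\<close>
lemma minimizing_sequence_Cauchy:
  fixes V :: "'a::real_inner set"
  assumes sV: "subspace V" and vV: "\<And>n. v n \<in> V"
    and dle: "\<And>w. w \<in> V \<Longrightarrow> d \<le> (norm (x - w))\<^sup>2"
    and vd: "\<And>n. (norm (x - v n))\<^sup>2 < d + 1 / (real n + 1)"
  shows "Cauchy v"
proof -
  have key: "(norm (v m - v n))\<^sup>2 \<le> 2 / (real m + 1) + 2 / (real n + 1)" for m n
  proof -
    have mid: "(1/2) *\<^sub>R (v m + v n) \<in> V"
      using sV vV by (simp add: subspace_add subspace_scale)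
    have "(x - v m) + (x - v n) = 2 *\<^sub>R (x - (1/2) *\<^sub>R (v m + v n))"
      by (simp add: algebra_simps scaleR_2)
    then have "(norm ((x - v m) + (x - v n)))\<^sup>2 = 4 * (norm (x - (1/2) *\<^sub>R (v m + v n)))\<^sup>2"
      by (simp add: power2_eq_square)
    moreover have "(norm (v m - v n))\<^sup>2 + (norm ((x - v m) + (x - v n)))\<^sup>2
        = 2 * (norm (x - v m))\<^sup>2 + 2 * (norm (x - v n))\<^sup>2"
      by (simp add: power2_norm_eq_inner inner_add_left inner_add_right inner_diff_left
          inner_diff_right inner_commute)
    ultimately show ?thesis using vd[of m] vd[of n] dle[OF mid] by linarith
  qed
  show "Cauchy v"
  proof (rule metric_CauchyI)
    fix e :: real assume e: "e > 0"
    obtain M :: nat where M: "4 / e\<^sup>2 < real M" using reals_Archimedean2 by blast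
    have Mpos: "real M > 0" using M e by (smt (verit) divide_pos_pos zero_less_power)
    show "\<exists>M. \<forall>m\<ge>M. \<forall>n\<ge>M. dist (v m) (v n) < e"
    proof (intro exI allI impI)
      fix m n assume "m \<ge> M" "n \<ge> M"
      then have "2 / (real m + 1) \<le> 2 / real M" "2 / (real n + 1) \<le> 2 / real M"
        using Mpos by (simp_all add: frac_le)
      moreover have "4 / real M < e\<^sup>2" using M Mpos e by (simp add: field_simps)
      ultimately have "(norm (v m - v n))\<^sup>2 < e\<^sup>2" using key[of m n] by linarith
      then show "dist (v m) (v n) < e" using e by (simp add: dist_norm power_less_imp_less_base)
    qed
  qed
qed

lemma closest_point_in_subspace:
  fixes V :: "'a::{real_inner,complete_space} set"
  assumes sV: "subspace V" and cV: "closed V"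
  shows "\<exists>p\<in>V. \<forall>w\<in>V. (norm (x - p))\<^sup>2 \<le> (norm (x - w))\<^sup>2"
proof -
  define D where "D = (\<lambda>v. (norm (x - v))\<^sup>2) ` V"
  define d where "d = Inf D"
  have Dne: "D \<noteq> {}" using subspace_0[OF sV] by (auto simp: D_def)
  have bdd: "bdd_below D" unfolding D_def by (rule bdd_belowI[of _ 0]) auto
  have dle: "d \<le> (norm (x - w))\<^sup>2" if "w \<in> V" for w
    unfolding d_def by (rule cInf_lower) (use that bdd in \<open>auto simp: D_def\<close>)
  have "\<exists>v\<in>V. (norm (x - v))\<^sup>2 < d + 1 / (real n + 1)" for n :: nat
  proof -
    have "Inf D < d + 1 / (real n + 1)" by (simp add: d_def)
    then obtain s where "s \<in> D" "s < d + 1 / (real n + 1)" using cInf_lessD[OF Dne] by blast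
    then show ?thesis by (auto simp: D_def)
  qed
  then obtain v where vV: "\<And>n. v n \<in> V" and vd: "\<And>n. (norm (x - v n))\<^sup>2 < d + 1 / (real n + 1)"
    by metis
  have "Cauchy v" by (rule minimizing_sequence_Cauchy[OF sV vV dle vd])
  then obtain p where vp: "v \<longlonglongrightarrow> p" using Cauchy_convergent_iff convergent_def by blast
  have pV: "p \<in> V" using closed_sequentially[OF cV] vV vp by blast
  have "(\<lambda>n. (norm (x - v n))\<^sup>2) \<longlonglongrightarrow> (norm (x - p))\<^sup>2" by (intro tendsto_intros vp)
  moreover have "(\<lambda>n. d + 1 / (real n + 1)) \<longlonglongrightarrow> d + 0"
    by (intro tendsto_intros inverse_Suc_tendsto_zero)
  ultimately have "(norm (x - p))\<^sup>2 \<le> d + 0"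
    by (rule LIMSEQ_le) (use vd in \<open>auto intro: less_imp_le\<close>)
  then show ?thesis using pV dle by (metis add_0_right order_trans)
qed

lemma closest_point_orthogonal:
  fixes V :: "'a::real_inner set"
  assumes sV: "subspace V" and pV: "p \<in> V"
    and closest: "\<forall>w\<in>V. (norm (x - p))\<^sup>2 \<le> (norm (x - w))\<^sup>2" and wV: "w \<in> V"
  shows "inner (x - p) w = 0"
proof -
  have "0 \<le> t * (- 2 * inner (x - p) w) + t\<^sup>2 * inner w w" for t
  proof -
    have "p + t *\<^sub>R w \<in> V" using sV pV wV by (simp add: subspace_add subspace_scale)
    then have "(norm (x - p))\<^sup>2 \<le> (norm (x - (p + t *\<^sub>R w)))\<^sup>2"
      using closest by blast
    moreover have "(norm (x - (p + t *\<^sub>R w)))\<^sup>2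
        = (norm (x - p))\<^sup>2 - 2 * t * inner (x - p) w + t\<^sup>2 * inner w w"
      unfolding power2_norm_eq_inner
      by (simp add: inner_diff_left inner_diff_right inner_add_left inner_add_right inner_commute
          power2_eq_square algebra_simps)
    ultimately show ?thesis by (simp add: algebra_simps)
  qed
  then show ?thesis using quadratic_nonneg_imp_linear_zero by fastforce
qed

lemma orthogonal_projection_exists:
  fixes V :: "'a::{real_inner,complete_space} set"
  assumes "subspace V" "closed V"
  shows "\<exists>p\<in>V. \<forall>v\<in>V. inner (x - p) v = 0"
  using closest_point_in_subspace[OF assms, of x] closest_point_orthogonal[OF assms(1)] by blast

context
  fixes V :: "'a::{real_inner,complete_space} set"
  assumes sV: "subspace V" and cV: "closed V"
begin

lemma oproj_uniq:
  assumes "p \<in> V" "\<forall>v\<in>V. inner (x - p) v = 0" "q \<in> V" "\<forall>v\<in>V. inner (x - q) v = 0"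
  shows "p = q"
proof -
  have "p - q \<in> V" using assms sV by (simp add: subspace_diff)
  then have "inner (x - q) (p - q) - inner (x - p) (p - q) = 0" using assms by simp
  then have "inner (p - q) (p - q) = 0" by (simp add: inner_diff_left inner_diff_right inner_commute)
  then show ?thesis by simp
qed

lemma oproj_char: "oproj V x \<in> V \<and> (\<forall>v\<in>V. inner (x - oproj V x) v = 0)"
proof -
  have "\<exists>!p. p \<in> V \<and> (\<forall>v\<in>V. inner (x - p) v = 0)"
    using orthogonal_projection_exists[OF sV cV, of x] oproj_uniq by blast
  then show ?thesis unfolding oproj_def by (rule theI')
qed

lemma oproj_in: "oproj V x \<in> V" using oproj_char by blast

lemma oproj_orth: "v \<in> V \<Longrightarrow> inner (x - oproj V x) v = 0" using oproj_char by blast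

lemma oproj_eqI: "p \<in> V \<Longrightarrow> \<forall>v\<in>V. inner (x - p) v = 0 \<Longrightarrow> oproj V x = p"
  using oproj_uniq oproj_char by blast

lemma oproj_id: "v \<in> V \<Longrightarrow> oproj V v = v"
  by (rule oproj_eqI) auto

lemma oproj_inner: "y \<in> V \<Longrightarrow> inner (oproj V x) y = inner x y"
  using oproj_orth[of y x] by (simp add: inner_diff_left)

lemma oproj_inner2: "y \<in> V \<Longrightarrow> inner y (oproj V x) = inner y x"
  using oproj_inner by (simp add: inner_commute)

lemma oproj_add: "oproj V (x + y) = oproj V x + oproj V y"
proof (rule oproj_eqI)
  show "oproj V x + oproj V y \<in> V" using sV oproj_in by (simp add: subspace_add)
  show "\<forall>v\<in>V. inner (x + y - (oproj V x + oproj V y)) v = 0"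
  proof
    fix v assume v: "v \<in> V"
    have "inner (x + y - (oproj V x + oproj V y)) v = inner (x - oproj V x) v + inner (y - oproj V y) v"
      by (simp add: inner_add_left inner_diff_left)
    then show "inner (x + y - (oproj V x + oproj V y)) v = 0" using oproj_orth[OF v] by simp
  qed
qed

lemma oproj_scale: "oproj V (c *\<^sub>R x) = c *\<^sub>R oproj V x"
proof (rule oproj_eqI)
  show "c *\<^sub>R oproj V x \<in> V" using sV oproj_in by (simp add: subspace_scale)
  show "\<forall>v\<in>V. inner (c *\<^sub>R x - c *\<^sub>R oproj V x) v = 0"
  proof
    fix v assume v: "v \<in> V"
    have "inner (c *\<^sub>R x - c *\<^sub>R oproj V x) v = c * inner (x - oproj V x) v"
      by (simp add: inner_diff_left right_diff_distrib)
    then show "inner (c *\<^sub>R x - c *\<^sub>R oproj V x) v = 0" using oproj_orth[OF v] by simp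
  qed
qed

lemma oproj_linear: "linear (oproj V)"
  by (rule linearI) (simp_all add: oproj_add oproj_scale)

lemma oproj_norm: "norm (oproj V x) \<le> norm x"
proof -
  define p where "p = oproj V x"
  define r where "r = x - p"
  have o: "inner r p = 0" unfolding r_def p_def by (rule oproj_orth[OF oproj_in])
  have "inner x x = inner (p + r) (p + r)" by (simp add: r_def)
  also have "\<dots> = inner p p + inner p r + inner r p + inner r r"
    by (simp add: inner_add_left inner_add_right)
  finally have "inner p p \<le> inner x x" using o inner_commute[of p r] by simp
  then have "(norm p)\<^sup>2 \<le> (norm x)\<^sup>2" by (simp add: power2_norm_eq_inner)
  then show ?thesis unfolding p_def by (rule power2_le_imp_le) simp
qed

lemma oproj_bl: "bounded_linear (oproj V)"
  using oproj_linear oproj_norm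
  by (intro bounded_linear_intro[of _ 1]) (auto simp: oproj_add oproj_scale)

end

lemma gdist_bound:
  fixes X Y :: "'a::{real_inner,complete_space} set"
  assumes "subspace X" "closed X" "subspace Y" "closed Y"
  shows "norm (oproj X x - oproj Y x) \<le> gdist X Y * norm x"
proof -
  have "bounded_linear (\<lambda>x. oproj X x - oproj Y x)"
    using oproj_bl assms by (intro bounded_linear_sub) auto
  then show ?thesis unfolding gdist_def by (rule onorm)
qed

lemma gdist_nonneg:
  fixes X Y :: "'a::{real_inner,complete_space} set"
  assumes "subspace X" "closed X" "subspace Y" "closed Y"
  shows "gdist X Y \<ge> 0"
proof -
  have "bounded_linear (\<lambda>x. oproj X x - oproj Y x)"
    using oproj_bl assms by (intro bounded_linear_sub) auto
  then show ?thesis unfolding gdist_def by (rule onorm_pos_le)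
qed

lemma oproj_moves_little:
  fixes X Y :: "'a::{real_inner,complete_space} set"
  assumes "subspace X" "closed X" "subspace Y" "closed Y" and x: "x \<in> Y"
  shows "norm (oproj X x - x) \<le> gdist X Y * norm x"
  using gdist_bound[OF assms(1-4), of x] oproj_id[OF assms(3,4) x] by simp

lemma quad_form_diff_vector:
  fixes T :: "'a::real_inner \<Rightarrow>\<^sub>L 'a"
  shows "\<bar>inner (T y) y - inner (T x) x\<bar> \<le> norm T * norm (y - x) * (norm x + norm y)"
proof -
  have eq: "inner (T y) y - inner (T x) x = inner (T (y - x)) y + inner (T x) (y - x)"
    by (simp add: blinfun.diff_right inner_diff_left inner_diff_right)
  have "\<bar>inner (T (y - x)) y\<bar> \<le> norm T * norm (y - x) * norm y"
    by (rule order_trans[OF Cauchy_Schwarz_ineq2 mult_right_mono[OF norm_blinfun]]) simp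
  moreover have "\<bar>inner (T x) (y - x)\<bar> \<le> norm T * norm x * norm (y - x)"
    by (rule order_trans[OF Cauchy_Schwarz_ineq2 mult_right_mono[OF norm_blinfun]]) simp
  ultimately show ?thesis unfolding eq by (smt (verit) mult.commute mult.left_commute distrib_left)
qed

lemma quad_form_diff_operator:
  fixes T T' :: "'a::real_inner \<Rightarrow>\<^sub>L 'a"
  shows "\<bar>inner (T x) x - inner (T' x) x\<bar> \<le> norm (T - T') * (norm x)\<^sup>2"
proof -
  have "inner (T x) x - inner (T' x) x = inner ((T - T') x) x"
    by (simp add: blinfun.diff_left inner_diff_left)
  also have "\<bar>\<dots>\<bar> \<le> norm ((T - T') x) * norm x" by (rule Cauchy_Schwarz_ineq2)
  also have "\<dots> \<le> norm (T - T') * norm x * norm x" by (rule mult_right_mono[OF norm_blinfun]) simp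
  finally show ?thesis by (simp add: power2_eq_square mult.assoc)
qed

text \<open>If no nonzero vector of span I is orthogonal to the finite set S, then I has at most
  card S elements: x \<mapsto> \<Sum>s\<in>S. \<langle>x,s\<rangle> s is injective on span I and maps into span S.\<close>
lemma card_le_orth:
  fixes S :: "'a::real_inner set"
  assumes fS: "finite S" and iI: "independent I"
    and H: "\<forall>x\<in>span I. (\<forall>s\<in>S. inner x s = 0) \<longrightarrow> x = 0"
  shows "finite I \<and> card I \<le> card S"
proof -
  define g where "g x = (\<Sum>s\<in>S. inner x s *\<^sub>R s)" for x
  have lg: "linear g"
    by (rule linearI) (simp_all add: g_def inner_add_left scaleR_add_left sum.distrib scaleR_sum_right)
  have g0: "x = 0" if "x \<in> span I" "g x = 0" for x
  proof -
    have "inner (g x) x = (\<Sum>s\<in>S. (inner x s)\<^sup>2)"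
      unfolding g_def inner_sum_left by (simp add: power2_eq_square inner_commute)
    then have "(\<Sum>s\<in>S. (inner x s)\<^sup>2) = 0" using that by simp
    then have "\<forall>s\<in>S. (inner x s)\<^sup>2 = 0" using sum_nonneg_eq_0_iff[OF fS, of "\<lambda>s. (inner x s)\<^sup>2"] by simp
    then show "x = 0" using H that by simp
  qed
  have inj: "inj_on g (span I)"
    using g0 linear_inj_on_iff_eq_0[OF lg subspace_span] by blast
  have ind: "independent (g ` I)"
    by (rule linear_independent_injective_image[OF lg iI inj])
  have sub: "g ` I \<subseteq> span S"
  proof
    fix y assume "y \<in> g ` I"
    then obtain x where "y = g x" by blast
    show "y \<in> span S" unfolding \<open>y = g x\<close> g_def
      by (rule span_sum, rule span_scale, rule span_base)
  qed
  have "finite (g ` I) \<and> card (g ` I) \<le> card S"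
    by (rule independent_span_bound[OF fS ind sub])
  moreover have injI: "inj_on g I" using inj span_superset inj_on_subset by blast
  ultimately show ?thesis using finite_imageD card_image by metis
qed


lemma edim_ge:
  assumes "finite E" "independent E" "E \<subseteq> W"
  shows "enat (card E) \<le> edim W"
  unfolding edim_def by (rule Sup_upper) (use assms in blast)


lemma enat_Sup_in:
  fixes X :: "enat set"
  assumes "X \<noteq> {}" "\<And>x. x \<in> X \<Longrightarrow> x \<le> enat m"
  shows "Sup X \<in> X"
proof -
  have "finite X" using assms finite_enat_bounded by blast
  then show ?thesis using assms cSup_eq_Max Max_in by metis
qed

lemma sup_add_bound:
  fixes X Y :: "enat set"
  assumes "X \<noteq> {}" "Y \<noteq> {}" "\<And>x y. x \<in> X \<Longrightarrow> y \<in> Y \<Longrightarrow> x + y \<le> enat m"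
  shows "Sup X + Sup Y \<le> enat m"
proof -
  obtain x0 where x0: "x0 \<in> X" using assms by blast
  obtain y0 where y0: "y0 \<in> Y" using assms by blast
  have bx: "x \<le> enat m" if "x \<in> X" for x
    using assms(3)[OF that y0] by (metis add_increasing2 order_trans zero_le order_refl)
  have by': "y \<le> enat m" if "y \<in> Y" for y
    using assms(3)[OF x0 that] by (metis add_increasing order_trans zero_le order_refl)
  have "Sup X \<in> X" by (rule enat_Sup_in[OF assms(1) bx])
  moreover have "Sup Y \<in> Y" by (rule enat_Sup_in[OF assms(2) by'])
  ultimately show ?thesis using assms(3) by blast
qed

lemma edim_attained:
  fixes W :: "'a::real_vector set"
  assumes sW: "subspace W" and ed: "edim W = enat k"
  shows "\<exists>E. finite E \<and> independent E \<and> card E = k \<and> E \<subseteq> W \<and> W \<subseteq> span E"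
proof -
  define Y where "Y = {enat (card E) | E. finite E \<and> independent E \<and> E \<subseteq> W}"
  have SY: "Sup Y = enat k" using ed unfolding edim_def Y_def by simp
  have "enat (card ({}::'a set)) \<in> Y" unfolding Y_def
    by (intro CollectI exI[of _ "{}"]) (simp add: independent_empty)
  then have Yne: "Y \<noteq> {}" by (metis empty_iff)
  have Yb: "y \<le> enat k" if "y \<in> Y" for y using that SY by (metis Sup_upper)
  have "Sup Y \<in> Y" by (rule enat_Sup_in[OF Yne Yb])
  then have "enat k \<in> Y" using SY by simp
  then obtain E where E: "enat (card E) = enat k" "finite E" "independent E" "E \<subseteq> W"
    unfolding Y_def by auto
  have "W \<subseteq> span E"
  proof
    fix x assume x: "x \<in> W"
    show "x \<in> span E"
    proof (rule ccontr)
      assume xn: "x \<notin> span E"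
      have i: "independent (insert x E)" by (rule independent_insertI[OF xn E(3)])
      have f: "finite (insert x E)" using E(2) by simp
      have s: "insert x E \<subseteq> W" using x E(4) by simp
      have "x \<notin> E" using xn span_superset by blast
      then have c: "card (insert x E) = k + 1" using E(1,2) by simp
      have "enat (card (insert x E)) \<le> edim W" by (rule edim_ge[OF f i s])
      then show False using c ed by simp
    qed
  qed
  then show ?thesis using E by (intro exI[of _ E]) simp
qed


lemma n_minus_attained:
  fixes T :: "'a::real_inner \<Rightarrow>\<^sub>L 'a"
  assumes sV: "subspace V" and nm: "n_minus T V = enat n"
  shows "\<exists>E. finite E \<and> independent E \<and> card E = n \<and> span E \<subseteq> V \<and>
           (\<forall>x\<in>span E. x \<noteq> 0 \<longrightarrow> inner (T x) x < 0)"
proof -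
  define X where "X = {edim W | W. subspace W \<and> W \<subseteq> V \<and> (\<forall>x\<in>W. x \<noteq> 0 \<longrightarrow> inner (T x) x < 0)}"
  have SX: "Sup X = enat n" using nm unfolding n_minus_def X_def by simp
  have "edim {0::'a} \<in> X"
    unfolding X_def using subspace_0[OF sV] by (intro CollectI exI[of _ "{0}"]) (simp add: subspace_def)
  moreover have "x \<le> enat n" if "x \<in> X" for x using that SX by (metis Sup_upper)
  ultimately have "enat n \<in> X" using enat_Sup_in[of X n] SX by auto
  then obtain W where W: "edim W = enat n" "subspace W" "W \<subseteq> V" "\<forall>x\<in>W. x \<noteq> 0 \<longrightarrow> inner (T x) x < 0"
    unfolding X_def by auto
  obtain E where E: "finite E" "independent E" "card E = n" "E \<subseteq> W"
    using edim_attained[OF W(2,1)] by blast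
  have "span E \<subseteq> W" using W(2) E(4) by (simp add: span_minimal)
  then show ?thesis using E W(3,4) by blast
qed

lemma negative_span_le_n_minus:
  fixes T :: "'a::real_inner \<Rightarrow>\<^sub>L 'a"
  assumes "finite E" "independent E" "span E \<subseteq> V" "\<forall>x\<in>span E. x \<noteq> 0 \<longrightarrow> inner (T x) x < 0"
  shows "enat (card E) \<le> n_minus T V"
proof -
  have "enat (card E) \<le> edim (span E)" by (rule edim_ge[OF assms(1,2) span_superset])
  also have "edim (span E) \<le> n_minus T V"
    unfolding n_minus_def by (rule Sup_upper, intro CollectI exI[of _ "span E"]) (use subspace_span assms in simp)
  finally show ?thesis .
qed

lemma indep_union:
  fixes A B :: "'a::real_vector set"
  assumes "finite B" "independent A" "independent B" "span A \<inter> span B \<subseteq> {0}"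
  shows "independent (A \<union> B) \<and> A \<inter> B = {}"
proof -
  have "independent (A \<union> B)" using assms
  proof (induction B rule: finite_induct)
    case empty
    then show ?case by simp
  next
    case (insert b B)
    have iB: "independent B" using insert.prems(2) by (rule independent_mono) auto
    have sp: "span A \<inter> span B \<subseteq> {0}" using insert.prems(3) span_mono[of B "insert b B"] by blast
    have IH: "independent (A \<union> B)" using insert.IH insert.prems(1) iB sp by blast
    have bnot: "b \<notin> span B" using insert.prems(2) insert.hyps(2) by (simp add: independent_insert)
    have "b \<notin> span (A \<union> B)"
    proof
      assume "b \<in> span (A \<union> B)"
      then obtain a c where ac: "b = a + c" "a \<in> span A" "c \<in> span B" by (auto simp: span_Un)
      have "a = b - c" using ac by simp
      moreover have "b - c \<in> span (insert b B)"
        using ac span_mono[of B "insert b B"] by (intro span_diff) (auto intro: span_base)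
      ultimately have "a = 0" using ac(2) insert.prems(3) by blast
      then show False using ac bnot by simp
    qed
    then show ?case using IH by (simp add: independent_insertI)
  qed
  moreover have "A \<inter> B = {}"
  proof (rule ccontr)
    assume "A \<inter> B \<noteq> {}"
    then obtain x where "x \<in> A" "x \<in> B" by blast
    then have "x = 0" using assms(4) span_base by blast
    then show False using \<open>x \<in> A\<close> assms(2) dependent_zero by blast
  qed
  ultimately show ?thesis by blast
qed

lemma compact_box_sums:
  fixes h :: "'b \<Rightarrow> 'a::real_normed_vector"
  assumes "finite B"
  shows "compact {\<Sum>b\<in>B. f b *\<^sub>R h b | f. \<forall>b\<in>B. \<bar>f b\<bar> \<le> r}"
  using assms
proof (induction B rule: finite_induct)
  case empty
  then show ?case by simp
next
  case (insert a B)
  define C where "C = {\<Sum>b\<in>B. f b *\<^sub>R h b | f. \<forall>b\<in>B. \<bar>f b\<bar> \<le> r}"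
  have eq: "{\<Sum>b\<in>insert a B. f b *\<^sub>R h b | f. \<forall>b\<in>insert a B. \<bar>f b\<bar> \<le> r}
      = (\<lambda>p. fst p *\<^sub>R h a + snd p) ` ({-r..r} \<times> C)" (is "?L = ?R")
  proof
    show "?L \<subseteq> ?R"
    proof
      fix z assume "z \<in> ?L"
      then obtain f where f: "z = (\<Sum>b\<in>insert a B. f b *\<^sub>R h b)" "\<forall>b\<in>insert a B. \<bar>f b\<bar> \<le> r" by blast
      have "z = f a *\<^sub>R h a + (\<Sum>b\<in>B. f b *\<^sub>R h b)" using f insert.hyps by simp
      moreover have "(\<Sum>b\<in>B. f b *\<^sub>R h b) \<in> C" using f(2) unfolding C_def by blast
      moreover have "f a \<in> {-r..r}" using f(2) by auto
      ultimately show "z \<in> ?R" by (intro image_eqI[where x="(f a, \<Sum>b\<in>B. f b *\<^sub>R h b)"]) auto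
    qed
  next
    show "?R \<subseteq> ?L"
    proof
      fix z assume "z \<in> ?R"
      then obtain t y where ty: "z = t *\<^sub>R h a + y" "t \<in> {-r..r}" "y \<in> C" by auto
      then obtain f where f: "y = (\<Sum>b\<in>B. f b *\<^sub>R h b)" "\<forall>b\<in>B. \<bar>f b\<bar> \<le> r" unfolding C_def by blast
      define f' where "f' = f(a := t)"
      have "(\<Sum>b\<in>B. f' b *\<^sub>R h b) = (\<Sum>b\<in>B. f b *\<^sub>R h b)"
        using insert.hyps by (intro sum.cong) (auto simp: f'_def)
      then have "z = (\<Sum>b\<in>insert a B. f' b *\<^sub>R h b)" using ty f insert.hyps by (simp add: f'_def)
      moreover have "\<forall>b\<in>insert a B. \<bar>f' b\<bar> \<le> r" using f ty by (auto simp: f'_def)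
      ultimately show "z \<in> ?L" by blast
    qed
  qed
  have "compact ({-r..r} \<times> C)" using insert.IH unfolding C_def by (intro compact_Times) auto
  moreover have "continuous_on ({-r..r} \<times> C) (\<lambda>p. fst p *\<^sub>R h a + snd p)"
    by (intro continuous_intros)
  ultimately show ?case unfolding eq by (rule compact_continuous_image[rotated])
qed

text \<open>With S = {} it is equivalent to essential positivity; with B = {} and c > 0 it says that
  T is coercive on V \<inter> S^\<bottom>.\<close>
definition garding :: "('a::real_inner \<Rightarrow>\<^sub>L 'a) \<Rightarrow> 'a set \<Rightarrow> 'a set \<Rightarrow> 'a set \<Rightarrow> real \<Rightarrow> real \<Rightarrow> bool" where
  "garding T V S B c M \<longleftrightarrow> (\<forall>y\<in>V. (\<forall>s\<in>S. inner y s = 0) \<longrightarrow>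
      c * (norm y)\<^sup>2 - M * (\<Sum>b\<in>B. (inner y b)\<^sup>2) \<le> inner (T y) y)"

lemma gardingD:
  "garding T V S B c M \<Longrightarrow> y \<in> V \<Longrightarrow> (\<forall>s\<in>S. inner y s = 0) \<Longrightarrow>
    c * (norm y)\<^sup>2 - M * (\<Sum>b\<in>B. (inner y b)\<^sup>2) \<le> inner (T y) y"
  unfolding garding_def by blast

lemma garding_pos:
  assumes "garding T V S B c M" "c > 0"
  shows "\<forall>x\<in>V. (\<forall>s\<in>S \<union> B. inner x s = 0) \<longrightarrow> x \<noteq> 0 \<longrightarrow> inner (T x) x > 0"
proof (intro ballI impI)
  fix x assume x: "x \<in> V" "\<forall>s\<in>S \<union> B. inner x s = 0" "x \<noteq> 0"
  then have "c * (norm x)\<^sup>2 - M * (\<Sum>b\<in>B. (inner x b)\<^sup>2) \<le> inner (T x) x"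
    using gardingD[OF assms(1)] by blast
  moreover have "(\<Sum>b\<in>B. (inner x b)\<^sup>2) = 0" using x by simp
  moreover have "c * (norm x)\<^sup>2 > 0" using x assms by simp
  ultimately show "inner (T x) x > 0" by simp
qed

lemma los_scale: "linear_on_sub V f \<Longrightarrow> x \<in> V \<Longrightarrow> f (a *\<^sub>R x) = a *\<^sub>R f x"
  by (simp add: linear_on_sub_def)

lemma los_add: "linear_on_sub V f \<Longrightarrow> x \<in> V \<Longrightarrow> y \<in> V \<Longrightarrow> f (x + y) = f x + f y"
  by (simp add: linear_on_sub_def)

lemma los_zero: "linear_on_sub V f \<Longrightarrow> subspace V \<Longrightarrow> f 0 = 0"
  using los_scale[of V f 0 0] by (simp add: subspace_0)

lemma pos_iso_Cauchy_Schwarz: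
  assumes sV: "subspace V" and P: "pos_iso_on V P" and x: "x \<in> V" and y: "y \<in> V"
  shows "(inner (P x) y)\<^sup>2 \<le> inner (P x) x * inner (P y) y"
proof -
  have lin: "linear_on_sub V P" and sym: "\<forall>x\<in>V. \<forall>y\<in>V. inner (P x) y = inner x (P y)"
    and pos: "\<forall>x\<in>V. x \<noteq> 0 \<longrightarrow> inner (P x) x > 0"
    using P by (auto simp: pos_iso_on_def)
  have P0: "P 0 = 0" by (rule los_zero[OF lin sV])
  have nn: "inner (P z) z \<ge> 0" if "z \<in> V" for z
    using pos that P0 by (cases "z = 0") (auto intro: less_imp_le)
  show ?thesis
  proof (cases "y = 0")
    case True
    then show ?thesis using P0 by simp
  next
    case False
    define \<alpha> where "\<alpha> = inner (P x) x"
    define \<beta> where "\<beta> = inner (P y) y"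
    define \<gamma> where "\<gamma> = inner (P x) y"
    have b: "\<beta> > 0" using pos y False by (simp add: \<beta>_def)
    define t where "t = - \<gamma> / \<beta>"
    have zV: "x + t *\<^sub>R y \<in> V" using sV x y by (simp add: subspace_add subspace_scale)
    have Pz: "P (x + t *\<^sub>R y) = P x + t *\<^sub>R P y"
      using los_add[OF lin x] los_scale[OF lin y] sV y by (simp add: subspace_scale)
    have g2: "inner (P y) x = \<gamma>" using sym x y by (simp add: \<gamma>_def inner_commute)
    have "0 \<le> inner (P (x + t *\<^sub>R y)) (x + t *\<^sub>R y)" by (rule nn[OF zV])
    also have "\<dots> = \<alpha> + 2 * t * \<gamma> + t\<^sup>2 * \<beta>"
      unfolding Pz using g2 by (simp add: inner_add_left inner_add_right \<alpha>_def \<beta>_def \<gamma>_def power2_eq_square algebra_simps)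
    also have "\<dots> = \<alpha> - \<gamma>\<^sup>2 / \<beta>"
      using b by (simp add: t_def power2_eq_square field_simps)
    finally have "\<gamma>\<^sup>2 / \<beta> \<le> \<alpha>" by simp
    then have "\<gamma>\<^sup>2 \<le> \<alpha> * \<beta>" using b by (simp add: field_simps)
    then show ?thesis by (simp add: \<alpha>_def \<beta>_def \<gamma>_def)
  qed
qed

text \<open>A positive self-adjoint isomorphism is coercive: \<langle>Px,x\<rangle> \<ge> c |x|^2 with c = 1/C^3.\<close>
lemma pos_iso_coercive:
  assumes sV: "subspace V" and P: "pos_iso_on V P"
  shows "\<exists>c>0. \<forall>x\<in>V. c * (norm x)\<^sup>2 \<le> inner (P x) x"
proof -
  have lin: "linear_on_sub V P" and PV: "P ` V = V"
    and pos: "\<forall>x\<in>V. x \<noteq> 0 \<longrightarrow> inner (P x) x > 0"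
    using P by (auto simp: pos_iso_on_def)
  obtain C where C: "C > 0" "\<forall>x\<in>V. norm (P x) \<le> C * norm x \<and> norm x \<le> C * norm (P x)"
    using P by (auto simp: pos_iso_on_def)
  have P0: "P 0 = 0" by (rule los_zero[OF lin sV])
  have nn: "inner (P z) z \<ge> 0" if "z \<in> V" for z
    using pos that P0 by (cases "z = 0") (auto intro: less_imp_le)
  have main: "(1 / C^3) * (norm x)\<^sup>2 \<le> inner (P x) x" if x: "x \<in> V" for x
  proof -
    have Px: "P x \<in> V" using PV x by blast
    have a: "(norm (P x))\<^sup>2 \<le> C * inner (P x) x"
    proof (cases "P x = 0")
      case True
      then show ?thesis by simp
    next
      case False
      have cs: "(inner (P x) (P x))\<^sup>2 \<le> inner (P x) x * inner (P (P x)) (P x)"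
        by (rule pos_iso_Cauchy_Schwarz[OF sV P x Px])
      have i2: "inner (P (P x)) (P x) \<le> C * (norm (P x))\<^sup>2"
      proof -
        have "inner (P (P x)) (P x) \<le> norm (P (P x)) * norm (P x)" by (rule norm_cauchy_schwarz)
        also have "\<dots> \<le> C * norm (P x) * norm (P x)"
          using C(2) Px by (intro mult_right_mono) auto
        finally show ?thesis by (simp add: power2_eq_square mult.assoc)
      qed
      have "inner (P x) x * inner (P (P x)) (P x) \<le> inner (P x) x * (C * (norm (P x))\<^sup>2)"
        using i2 nn[OF x] by (rule mult_left_mono)
      with cs have "((norm (P x))\<^sup>2)\<^sup>2 \<le> (C * inner (P x) x) * (norm (P x))\<^sup>2"
        by (simp add: power2_norm_eq_inner[symmetric] algebra_simps)
      moreover have "(norm (P x))\<^sup>2 > 0" using False by simp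
      ultimately show ?thesis
        using mult_le_cancel_right_pos[of "(norm (P x))\<^sup>2" "(norm (P x))\<^sup>2" "C * inner (P x) x"]
        by (simp add: power2_eq_square[of "(norm (P x))\<^sup>2"])
    qed
    have "norm x \<le> C * norm (P x)" using C x by blast
    then have "(norm x)\<^sup>2 \<le> (C * norm (P x))\<^sup>2" by (rule power_mono) simp
    also have "\<dots> = C\<^sup>2 * (norm (P x))\<^sup>2" by (simp add: power_mult_distrib)
    also have "\<dots> \<le> C\<^sup>2 * (C * inner (P x) x)" using a by (rule mult_left_mono) simp
    finally have "(norm x)\<^sup>2 \<le> C^3 * inner (P x) x" by (simp add: power2_eq_square power3_eq_cube mult.assoc)
    then show ?thesis using C(1) by (simp add: field_simps)
  qed
  show ?thesis using C(1) main by (intro exI[of _ "1 / C^3"]) auto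
qed

text \<open>Young-type inequality |a| \<le> e + a^2/(4e), used to absorb the net error.\<close>
lemma abs_le_quad: "(e::real) > 0 \<Longrightarrow> \<bar>a\<bar> \<le> e + a\<^sup>2 / (4 * e)"
proof -
  assume e: "e > 0"
  have "0 \<le> (\<bar>a\<bar> - 2 * e)\<^sup>2" by simp
  then have "4 * e * \<bar>a\<bar> \<le> 4 * e * e + a\<^sup>2" by (simp add: power2_eq_square algebra_simps)
  then show ?thesis using e by (simp add: field_simps)
qed

lemma quadratic_bound_from_unit_vectors:
  assumes sV: "subspace V" and lin: "linear_on_sub V K"
    and unit: "\<And>u. u \<in> V \<Longrightarrow> norm u = 1 \<Longrightarrow> - a - b * (\<Sum>f\<in>F. (inner u f)\<^sup>2) \<le> inner (K u) u"
    and x: "x \<in> V"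
  shows "- a * (norm x)\<^sup>2 - b * (\<Sum>f\<in>F. (inner x f)\<^sup>2) \<le> inner (K x) x"
proof (cases "x = 0")
  case True
  then show ?thesis using los_zero[OF lin sV] by simp
next
  case False
  define n where "n = norm x"
  define u where "u = (1 / n) *\<^sub>R x"
  have n: "n > 0" using False by (simp add: n_def)
  have uV: "u \<in> V" using sV x by (simp add: u_def subspace_scale)
  have un: "norm u = 1" using n by (simp add: u_def n_def)
  have xu: "x = n *\<^sub>R u" using n by (simp add: u_def)
  have Kx: "K x = n *\<^sub>R K u" using los_scale[OF lin uV] xu by simp
  have "inner (K x) x = inner (n *\<^sub>R K u) (n *\<^sub>R u)" by (simp only: Kx) (simp only: xu[symmetric])
  then have "inner (K x) x = n\<^sup>2 * inner (K u) u" by (simp add: power2_eq_square)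
  moreover have "(\<Sum>f\<in>F. (inner x f)\<^sup>2) = n\<^sup>2 * (\<Sum>f\<in>F. (inner u f)\<^sup>2)"
    by (simp add: xu power_mult_distrib sum_distrib_left)
  moreover have "(norm x)\<^sup>2 = n\<^sup>2" by (simp add: n_def)
  moreover have "n\<^sup>2 * (- a - b * (\<Sum>f\<in>F. (inner u f)\<^sup>2)) \<le> n\<^sup>2 * inner (K u) u"
    using unit[OF uV un] by (rule mult_left_mono) simp
  ultimately show ?thesis by (simp add: algebra_simps)
qed

text \<open>The quadratic form of a compact operator is bounded below by -2e|x|^2 up to a
  finite-rank defect: approximate the image of the unit ball by a finite e-net F.\<close>
lemma compact_op_garding:
  assumes sV: "subspace V" and K: "compact_op_on V K" and e: "e > 0"
  shows "\<exists>F. finite F \<and> (\<forall>x\<in>V. - 2 * e * (norm x)\<^sup>2 - (1 / (4 * e)) * (\<Sum>f\<in>F. (inner x f)\<^sup>2) \<le> inner (K x) x)"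
proof -
  have lin: "linear_on_sub V K" and cK: "compact (closure (K ` (V \<inter> cball 0 1)))"
    using K by (auto simp: compact_op_on_def)
  obtain F where F: "finite F" "F \<subseteq> closure (K ` (V \<inter> cball 0 1))"
      "closure (K ` (V \<inter> cball 0 1)) \<subseteq> (\<Union>f\<in>F. ball f e)"
  proof -
    have "\<forall>e>0. \<exists>k. finite k \<and> k \<subseteq> closure (K ` (V \<inter> cball 0 1)) \<and>
        closure (K ` (V \<inter> cball 0 1)) \<subseteq> (\<Union>x\<in>k. ball x e)"
      by (rule seq_compact_imp_totally_bounded[OF compact_imp_seq_compact[OF cK]])
    then have "\<exists>k. finite k \<and> k \<subseteq> closure (K ` (V \<inter> cball 0 1)) \<and>
        closure (K ` (V \<inter> cball 0 1)) \<subseteq> (\<Union>x\<in>k. ball x e)" using e by blast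
    then show ?thesis using that by blast
  qed
  have unit: "- 2 * e - (1 / (4 * e)) * (\<Sum>f\<in>F. (inner u f)\<^sup>2) \<le> inner (K u) u"
    if u: "u \<in> V" "norm u = 1" for u
  proof -
    have "K u \<in> closure (K ` (V \<inter> cball 0 1))" using u closure_subset by fastforce
    then obtain f where f: "f \<in> F" "dist f (K u) < e" using F(3) by auto
    have "inner (K u) u = inner (K u - f) u + inner u f"
      using inner_diff_left[of "K u" f u] inner_commute[of f u] by simp
    moreover have "\<bar>inner (K u - f) u\<bar> \<le> e"
    proof -
      have "\<bar>inner (K u - f) u\<bar> \<le> norm (K u - f) * norm u" by (rule Cauchy_Schwarz_ineq2)
      also have "\<dots> \<le> e" using f u by (simp add: dist_norm norm_minus_commute)
      finally show ?thesis .
    qed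
    moreover have "\<bar>inner u f\<bar> \<le> e + (inner u f)\<^sup>2 / (4 * e)" by (rule abs_le_quad[OF e])
    moreover have "(inner u f)\<^sup>2 \<le> (\<Sum>f\<in>F. (inner u f)\<^sup>2)"
      by (rule member_le_sum) (use f F in auto)
    moreover have "(inner u f)\<^sup>2 / (4 * e) \<le> (1 / (4 * e)) * (\<Sum>f\<in>F. (inner u f)\<^sup>2)"
      using calculation(4) e by (simp add: divide_right_mono)
    ultimately show ?thesis by linarith
  qed
  then have "- 2 * e * (norm x)\<^sup>2 - (1 / (4 * e)) * (\<Sum>f\<in>F. (inner x f)\<^sup>2) \<le> inner (K x) x"
    if "x \<in> V" for x
    using quadratic_bound_from_unit_vectors[OF sV lin _ that, of "2 * e" "1 / (4 * e)" F] by simp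
  then show ?thesis using F(1) by blast
qed
lemma ess_pos_imp_garding:
  assumes sV: "subspace V" and E: "ess_pos T V"
  shows "\<exists>B c M. finite B \<and> c > 0 \<and> M \<ge> 0 \<and> garding T V {} B c M"
proof -
  obtain P K where P: "pos_iso_on V P" and K: "compact_op_on V K"
    and rep: "\<forall>x\<in>V. \<forall>y\<in>V. inner (T x) y = inner (P x + K x) y"
    using E by (auto simp: ess_pos_def)
  obtain c where c: "c > 0" "\<forall>x\<in>V. c * (norm x)\<^sup>2 \<le> inner (P x) x"
    using pos_iso_coercive[OF sV P] by blast
  have e: "c / 4 > 0" using c by simp
  obtain F where F: "finite F"
    "\<forall>x\<in>V. - 2 * (c/4) * (norm x)\<^sup>2 - (1 / (4 * (c/4))) * (\<Sum>f\<in>F. (inner x f)\<^sup>2) \<le> inner (K x) x"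
    using compact_op_garding[OF sV K e] by blast
  have "garding T V {} F (c / 2) (1 / c)"
    unfolding garding_def
  proof (intro ballI impI)
    fix y assume y: "y \<in> V"
    have "inner (T y) y = inner (P y) y + inner (K y) y" using rep y by (simp add: inner_add_left)
    moreover have "c * (norm y)\<^sup>2 \<le> inner (P y) y" using c(2) y by blast
    moreover have "- 2 * (c/4) * (norm y)\<^sup>2 - (1 / (4 * (c/4))) * (\<Sum>f\<in>F. (inner y f)\<^sup>2) \<le> inner (K y) y"
      using F(2) y by blast
    moreover have "1 / (4 * (c/4)) = 1 / c" by simp
    ultimately show "c / 2 * (norm y)\<^sup>2 - 1 / c * (\<Sum>b\<in>F. (inner y b)\<^sup>2) \<le> inner (T y) y"
      by linarith
  qed
  then show ?thesis using F(1) c(1) by (intro exI[of _ F] exI[of _ "c/2"] exI[of _ "1/c"]) auto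
qed
lemma coercive_lower_bound:
  fixes P :: "'a::real_inner \<Rightarrow> 'a"
  assumes "c * (norm x)\<^sup>2 \<le> inner (P x) x"
  shows "c * norm x \<le> norm (P x)"
proof (cases "x = 0")
  case False
  have "c * (norm x)\<^sup>2 \<le> norm (P x) * norm x" using assms norm_cauchy_schwarz order_trans by blast
  then show ?thesis using False by (simp add: power2_eq_square mult.assoc)
qed simp

text \<open>A bounded linear map that is bounded below on a closed subspace V has closed range P ` V:
  preimages of a convergent sequence form a Cauchy sequence in V.\<close>
lemma bounded_below_closed_range:
  fixes V :: "'a::{real_normed_vector,complete_space} set"
  assumes sV: "subspace V" and cV: "closed V" and bl: "bounded_linear P"
    and c: "c > 0" and low: "\<And>x. x \<in> V \<Longrightarrow> c * norm x \<le> norm (P x)"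
  shows "closed (P ` V)"
proof -
  have lin: "linear P" using bl bounded_linear.linear by blast
  define R where "R = P ` V"
  show ?thesis
    unfolding R_def[symmetric] closed_sequential_limits
  proof (intro allI impI, elim conjE)
    fix y l assume yR: "\<forall>n. y n \<in> R" and yl: "y \<longlonglongrightarrow> l"
    have "\<forall>n. \<exists>x. x \<in> V \<and> y n = P x" using yR unfolding R_def by blast
    then obtain x where xx: "\<forall>n. x n \<in> V \<and> y n = P (x n)" by metis
    have xV: "\<And>n. x n \<in> V" and yx: "\<And>n. y n = P (x n)" using xx by auto
    have Cy: "Cauchy y" using yl by (rule LIMSEQ_imp_Cauchy)
    have "Cauchy x"
    proof (rule metric_CauchyI)
      fix e :: real assume e: "e > 0"
      have ce: "c * e > 0" using e c by simp
      obtain N where N: "\<forall>m\<ge>N. \<forall>n\<ge>N. dist (y m) (y n) < c * e"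
        using metric_CauchyD[OF Cy ce] by blast
      show "\<exists>M. \<forall>m\<ge>M. \<forall>n\<ge>M. dist (x m) (x n) < e"
      proof (intro exI allI impI)
        fix m n assume "m \<ge> N" "n \<ge> N"
        then have d: "norm (y m - y n) < c * e" using N by (simp add: dist_norm)
        have "x m - x n \<in> V" using sV xV by (simp add: subspace_diff)
        then have "c * norm (x m - x n) \<le> norm (P (x m - x n))" by (rule low)
        also have "P (x m - x n) = y m - y n" using yx linear_diff[OF lin] by simp
        finally have "c * norm (x m - x n) < c * e" using d by simp
        then show "dist (x m) (x n) < e" using c by (simp add: dist_norm)
      qed
    qed
    then obtain z where xz: "x \<longlonglongrightarrow> z" using Cauchy_convergent_iff convergent_def by blast
    have zV: "z \<in> V" using closed_sequentially[OF cV] xV xz by blast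
    have "(\<lambda>n. P (x n)) \<longlonglongrightarrow> P z" by (rule bounded_linear.tendsto[OF bl xz])
    moreover have "y = (\<lambda>n. P (x n))" using yx by (simp add: fun_eq_iff)
    ultimately have "y \<longlonglongrightarrow> P z" by simp
    then have "l = P z" using yl LIMSEQ_unique by blast
    then show "l \<in> R" using zV unfolding R_def by blast
  qed
qed

text \<open>Lax-Milgram: a bounded linear map of V into itself with coercive quadratic form is
  onto V.  Its range is closed, and an element of V orthogonal to the range is zero.\<close>
lemma coercive_surjective:
  fixes V :: "'a::{real_inner,complete_space} set"
  assumes sV: "subspace V" and cV: "closed V" and bl: "bounded_linear P" and PV: "P ` V \<subseteq> V"
    and c: "c > 0" and coer: "\<forall>x\<in>V. c * (norm x)\<^sup>2 \<le> inner (P x) x"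
  shows "P ` V = V"
proof -
  have lin: "linear P" using bl bounded_linear.linear by blast
  define R where "R = P ` V"
  have sR: "subspace R" unfolding R_def by (rule linear_subspace_image[OF lin sV])
  have cR: "closed R" unfolding R_def
    using bounded_below_closed_range[OF sV cV bl c] coercive_lower_bound coer by blast
  have "V \<subseteq> R"
  proof
    fix z assume zV: "z \<in> V"
    define r where "r = oproj R z"
    have rR: "r \<in> R" unfolding r_def by (rule oproj_in[OF sR cR])
    have rV: "r \<in> V" using rR PV R_def by blast
    have d: "z - r \<in> V" using sV zV rV by (simp add: subspace_diff)
    have "P (z - r) \<in> R" using d unfolding R_def by blast
    then have "inner (z - r) (P (z - r)) = 0" unfolding r_def by (rule oproj_orth[OF sR cR])
    moreover have "c * (norm (z - r))\<^sup>2 \<le> inner (P (z - r)) (z - r)" using coer d by blast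
    ultimately have "c * (norm (z - r))\<^sup>2 \<le> 0" by (simp add: inner_commute)
    then have "z - r = 0" using c by (simp add: mult_le_0_iff)
    then show "z \<in> R" using rR by simp
  qed
  then show ?thesis using PV R_def by blast
qed

lemma coercive_pos_iso:
  fixes V :: "'a::{real_inner,complete_space} set"
  assumes sV: "subspace V" and cV: "closed V" and bl: "bounded_linear P" and PV: "P ` V \<subseteq> V"
    and c: "c > 0" and coer: "\<forall>x\<in>V. c * (norm x)\<^sup>2 \<le> inner (P x) x"
    and sym: "\<forall>x\<in>V. \<forall>y\<in>V. inner (P x) y = inner x (P y)"
  shows "pos_iso_on V P"
  unfolding pos_iso_on_def
proof (intro conjI)
  have lin: "linear P" using bl bounded_linear.linear by blast
  then show "linear_on_sub V P" unfolding linear_on_sub_def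
    using linear_add[OF lin] linear_scale[OF lin] by blast
  show "P ` V = V" by (rule coercive_surjective[OF sV cV bl PV c coer])
  obtain K0 where K0: "K0 > 0" "\<forall>x. norm (P x) \<le> norm x * K0"
    using bounded_linear.pos_bounded[OF bl] by blast
  have low: "c * norm x \<le> norm (P x)" if x: "x \<in> V" for x
    using coer x coercive_lower_bound by blast
  show "\<exists>C>0. \<forall>x\<in>V. norm (P x) \<le> C * norm x \<and> norm x \<le> C * norm (P x)"
  proof (intro exI[of _ "max K0 (1/c)"] conjI ballI)
    show "max K0 (1/c) > 0" using K0 by simp
    fix x assume x: "x \<in> V"
    have "norm (P x) \<le> K0 * norm x" using K0 by (simp add: mult.commute)
    also have "\<dots> \<le> max K0 (1/c) * norm x" by (rule mult_right_mono) auto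
    finally show "norm (P x) \<le> max K0 (1/c) * norm x" .
    have "norm x \<le> (1/c) * norm (P x)" using low[OF x] c by (simp add: field_simps)
    also have "\<dots> \<le> max K0 (1/c) * norm (P x)" by (rule mult_right_mono) auto
    finally show "norm x \<le> max K0 (1/c) * norm (P x)" .
  qed
  show "\<forall>x\<in>V. \<forall>y\<in>V. inner (P x) y = inner x (P y)" by (rule sym)
  show "\<forall>x\<in>V. x \<noteq> 0 \<longrightarrow> inner (P x) x > 0"
    using coer c by (meson less_le_trans zero_less_norm_iff zero_less_power mult_pos_pos)
qed

lemma finite_rank_compact_op:
  fixes V :: "'a::real_inner set"
  assumes sV: "subspace V" and fB: "finite B" and qV: "\<And>b. q b \<in> V"
  shows "compact_op_on V (\<lambda>x. \<Sum>b\<in>B. inner x (p b) *\<^sub>R q b)"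
  unfolding compact_op_on_def
proof (intro conjI)
  define K where "K x = (\<Sum>b\<in>B. inner x (p b) *\<^sub>R q b)" for x
  have lin: "linear K"
    by (rule linearI) (simp_all add: K_def inner_add_left scaleR_add_left sum.distrib scaleR_sum_right)
  then show "linear_on_sub V (\<lambda>x. \<Sum>b\<in>B. inner x (p b) *\<^sub>R q b)"
    unfolding linear_on_sub_def K_def[symmetric] using linear_add[OF lin] linear_scale[OF lin] by blast
  show "(\<lambda>x. \<Sum>b\<in>B. inner x (p b) *\<^sub>R q b) ` V \<subseteq> V"
    using sV qV by (auto intro!: subspace_sum subspace_scale)
  define r where "r = (\<Sum>b\<in>B. norm (p b))"
  define Cs where "Cs = {\<Sum>b\<in>B. f b *\<^sub>R q b | f. \<forall>b\<in>B. \<bar>f b\<bar> \<le> r}"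
  have cCs: "compact Cs" unfolding Cs_def by (rule compact_box_sums[OF fB])
  have "K ` (V \<inter> cball 0 1) \<subseteq> Cs"
  proof
    fix z assume "z \<in> K ` (V \<inter> cball 0 1)"
    then obtain x where x: "norm x \<le> 1" and z: "z = K x" by auto
    have "\<bar>inner x (p b)\<bar> \<le> r" if b: "b \<in> B" for b
    proof -
      have "\<bar>inner x (p b)\<bar> \<le> norm x * norm (p b)" by (rule Cauchy_Schwarz_ineq2)
      also have "\<dots> \<le> norm (p b)" using x by (simp add: mult_left_le_one_le)
      also have "\<dots> \<le> r" unfolding r_def by (intro member_le_sum b fB) simp
      finally show ?thesis .
    qed
    then show "z \<in> Cs" unfolding Cs_def z K_def by (intro CollectI exI[of _ "\<lambda>b. inner x (p b)"]) auto
  qed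
  then have "closure (K ` (V \<inter> cball 0 1)) \<subseteq> Cs"
    by (rule closure_minimal[OF _ compact_imp_closed[OF cCs]])
  then show "compact (closure ((\<lambda>x. \<Sum>b\<in>B. inner x (p b) *\<^sub>R q b) ` (V \<inter> cball 0 1)))"
    unfolding K_def[symmetric] using compact_Int_closed[OF cCs closed_closure] by (metis inf.absorb2)
qed

text \<open>Conversely, a Garding inequality without constraints gives essential positivity:
  T = P + K on V with P = (T + M \<Sum>b \<langle>\<cdot>, P_V b\<rangle> P_V b) compressed to V coercive and
  K = -M \<Sum>b \<langle>\<cdot>, P_V b\<rangle> P_V b of finite rank.\<close>
lemma garding_imp_ess_pos:
  fixes T :: "'a::{real_inner,complete_space} \<Rightarrow>\<^sub>L 'a"
  assumes sV: "subspace V" and cV: "closed V" and sa: "selfadjoint T"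
    and fB: "finite B" and c: "c > 0" and G: "garding T V {} B c M"
  shows "ess_pos T V"
proof -
  define pb where "pb b = oproj V b" for b
  have pbV: "pb b \<in> V" for b unfolding pb_def by (rule oproj_in[OF sV cV])
  define K where "K x = (\<Sum>b\<in>B. inner x (pb b) *\<^sub>R (- M *\<^sub>R pb b))" for x
  define P where "P x = oproj V (T x) - K x" for x
  have cop: "compact_op_on V K"
    unfolding K_def by (rule finite_rank_compact_op[OF sV fB]) (simp add: pbV subspace_neg[OF sV] subspace_scale[OF sV])
  have blK: "bounded_linear K" unfolding K_def
    by (rule bounded_linear_sum)
      (rule bounded_linear_compose[OF bounded_linear_scaleR_left bounded_linear_inner_left])
  have blP: "bounded_linear P" unfolding P_def
    by (intro bounded_linear_sub blK bounded_linear_compose[OF oproj_bl[OF sV cV]]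
        blinfun.bounded_linear_right)
  have PV: "P ` V \<subseteq> V"
    using cop oproj_in[OF sV cV] sV unfolding P_def compact_op_on_def by (auto intro: subspace_diff)
  have Kxy: "inner (K x) y = - M * (\<Sum>b\<in>B. inner x b * inner y b)" if "x \<in> V" "y \<in> V" for x y
    using that unfolding K_def inner_sum_left pb_def
    by (simp add: oproj_inner2[OF sV cV] sum_distrib_left inner_commute mult_ac)
  have Pxy: "inner (P x) y = inner (T x) y + M * (\<Sum>b\<in>B. inner x b * inner y b)"
    if "x \<in> V" "y \<in> V" for x y
    using that Kxy unfolding P_def by (simp add: inner_diff_left oproj_inner[OF sV cV])
  have coer: "\<forall>x\<in>V. c * (norm x)\<^sup>2 \<le> inner (P x) x"
    using gardingD[OF G] Pxy by (fastforce simp: power2_eq_square)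
  have sym: "\<forall>x\<in>V. \<forall>y\<in>V. inner (P x) y = inner x (P y)"
    using Pxy sa unfolding selfadjoint_def by (simp add: inner_commute mult.commute)
  have "pos_iso_on V P" by (rule coercive_pos_iso[OF sV cV blP PV c coer sym])
  moreover have "\<forall>x\<in>V. \<forall>y\<in>V. inner (T x) y = inner (P x + K x) y"
    unfolding P_def using oproj_inner[OF sV cV] by simp
  ultimately show ?thesis unfolding ess_pos_def using cop by blast
qed

lemma sq_sum_le: "((a::real) + d)\<^sup>2 \<le> 2 * a\<^sup>2 + 2 * d\<^sup>2"
proof -
  have "0 \<le> (a - d)\<^sup>2" by simp
  then show ?thesis by (simp add: power2_eq_square algebra_simps)
qed

lemma finite_rank_term_perturb:
  fixes x y :: "'a::real_inner"
  assumes g0: "g \<ge> 0" and g1: "g \<le> 1" and ne: "norm (y - x) \<le> g * norm x"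
  shows "(\<Sum>b\<in>B. (inner y b)\<^sup>2)
           \<le> 2 * (\<Sum>b\<in>B. (inner x b)\<^sup>2) + 2 * g * (norm x)\<^sup>2 * (\<Sum>b\<in>B. (norm b)\<^sup>2)"
proof -
  define n where "n = norm x"
  have "(inner y b)\<^sup>2 \<le> 2 * (inner x b)\<^sup>2 + 2 * (g * (n\<^sup>2 * (norm b)\<^sup>2))" for b
  proof -
    have "(inner y b)\<^sup>2 \<le> 2 * (inner x b)\<^sup>2 + 2 * (inner (y - x) b)\<^sup>2"
      using sq_sum_le[of "inner x b" "inner (y - x) b"] by (simp add: inner_diff_left)
    moreover have "\<bar>inner (y - x) b\<bar> \<le> g * n * norm b"
      by (rule order_trans[OF Cauchy_Schwarz_ineq2 mult_right_mono[OF ne[folded n_def]]]) simp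
    then have "(inner (y - x) b)\<^sup>2 \<le> (g * n * norm b)\<^sup>2"
      by (metis abs_ge_zero power2_abs power_mono)
    moreover have "(g * n * norm b)\<^sup>2 \<le> g * (n\<^sup>2 * (norm b)\<^sup>2)"
    proof -
      have "g\<^sup>2 \<le> g" using g0 g1 by (simp add: power2_eq_square mult_left_le_one_le)
      then have "g\<^sup>2 * (n\<^sup>2 * (norm b)\<^sup>2) \<le> g * (n\<^sup>2 * (norm b)\<^sup>2)" by (rule mult_right_mono) simp
      then show ?thesis by (simp only: power_mult_distrib mult.assoc)
    qed
    ultimately show ?thesis by linarith
  qed
  then have "(\<Sum>b\<in>B. (inner y b)\<^sup>2) \<le> (\<Sum>b\<in>B. 2 * (inner x b)\<^sup>2 + 2 * (g * (n\<^sup>2 * (norm b)\<^sup>2)))"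
    by (rule sum_mono)
  also have "\<dots> = 2 * (\<Sum>b\<in>B. (inner x b)\<^sup>2) + 2 * g * n\<^sup>2 * (\<Sum>b\<in>B. (norm b)\<^sup>2)"
    by (simp add: sum.distrib sum_distrib_left mult.assoc)
  finally show ?thesis unfolding n_def .
qed

text \<open>Transfer of a Garding inequality from (T, V) to a nearby pair (T', V'): test it on the
  projection y = P_V x of x \<in> V'.\<close>
lemma garding_transfer:
  fixes T T' :: "'a::{real_inner,complete_space} \<Rightarrow>\<^sub>L 'a"
  assumes sV: "subspace V" and cV: "closed V" and sV': "subspace V'" and cV': "closed V'"
    and SV: "S \<subseteq> V" and c: "c \<ge> 0" and M: "M \<ge> 0" and G: "garding T V S B c M"
    and g1: "gdist V V' \<le> 1" and xV': "x \<in> V'" and xS: "\<forall>s\<in>S. inner x s = 0"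
  shows "(c - (2 * c + 2 * M * (\<Sum>b\<in>B. (norm b)\<^sup>2) + 2 * norm T) * gdist V V' - norm (T - T'))
           * (norm x)\<^sup>2 - 2 * M * (\<Sum>b\<in>B. (inner x b)\<^sup>2) \<le> inner (T' x) x"
proof -
  define g where "g = gdist V V'"
  define \<beta> where "\<beta> = (\<Sum>b\<in>B. (norm b)\<^sup>2)"
  define n where "n = norm x"
  define y where "y = oproj V x"
  have g0: "g \<ge> 0" unfolding g_def by (rule gdist_nonneg[OF sV cV sV' cV'])
  have b0: "\<beta> \<ge> 0" by (simp add: \<beta>_def sum_nonneg)
  have ne: "norm (y - x) \<le> g * n"
    unfolding y_def g_def n_def by (rule oproj_moves_little[OF sV cV sV' cV' xV'])
  have ny: "norm y \<le> n" unfolding y_def n_def by (rule oproj_norm[OF sV cV])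
  have yy: "(1 - 2 * g) * n\<^sup>2 \<le> (norm y)\<^sup>2"
  proof -
    have "n \<le> norm y + norm (y - x)"
      using norm_triangle_ineq2[of x y] norm_minus_commute[of x y] unfolding n_def by linarith
    then have "(1 - g) * n \<le> norm y" using ne by (simp add: algebra_simps)
    then have "((1 - g) * n)\<^sup>2 \<le> (norm y)\<^sup>2" using g1 by (intro power_mono) (auto simp: g_def n_def)
    moreover have "(1 - 2 * g) * n\<^sup>2 \<le> ((1 - g) * n)\<^sup>2"
      using zero_le_power2[of "g * n"] by (simp add: power2_eq_square algebra_simps)
    ultimately show ?thesis by linarith
  qed
  have Gy: "c * (norm y)\<^sup>2 - M * (\<Sum>b\<in>B. (inner y b)\<^sup>2) \<le> inner (T y) y"
    by (rule gardingD[OF G]) (use xS SV oproj_inner[OF sV cV] oproj_in[OF sV cV] in \<open>auto simp: y_def\<close>)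
  have sumy: "(\<Sum>b\<in>B. (inner y b)\<^sup>2) \<le> 2 * (\<Sum>b\<in>B. (inner x b)\<^sup>2) + 2 * g * n\<^sup>2 * \<beta>"
    unfolding \<beta>_def n_def by (rule finite_rank_term_perturb[OF g0 g1[folded g_def] ne[unfolded n_def]])
  have Tx: "inner (T y) y - 2 * norm T * g * n\<^sup>2 \<le> inner (T x) x"
  proof -
    have "\<bar>inner (T y) y - inner (T x) x\<bar> \<le> norm T * norm (y - x) * (norm x + norm y)"
      by (rule quad_form_diff_vector)
    also have "\<dots> \<le> norm T * (g * n) * (n + n)"
      using ne ny g0 by (intro mult_mono mult_left_mono add_mono) (auto simp: n_def)
    finally show ?thesis by (simp add: power2_eq_square algebra_simps)
  qed
  have T'x: "inner (T x) x - norm (T - T') * n\<^sup>2 \<le> inner (T' x) x"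
    using quad_form_diff_operator[of T x T'] unfolding n_def by linarith
  have "c * ((1 - 2 * g) * n\<^sup>2) \<le> c * (norm y)\<^sup>2" using yy c by (rule mult_left_mono)
  moreover have "M * (\<Sum>b\<in>B. (inner y b)\<^sup>2) \<le> M * (2 * (\<Sum>b\<in>B. (inner x b)\<^sup>2) + 2 * g * n\<^sup>2 * \<beta>)"
    using sumy M by (rule mult_left_mono)
  moreover have "(c - (2 * c + 2 * M * \<beta> + 2 * norm T) * g - norm (T - T')) * n\<^sup>2
        - 2 * M * (\<Sum>b\<in>B. (inner x b)\<^sup>2)
      = c * ((1 - 2 * g) * n\<^sup>2) - M * (2 * (\<Sum>b\<in>B. (inner x b)\<^sup>2) + 2 * g * n\<^sup>2 * \<beta>)
        - 2 * norm T * g * n\<^sup>2 - norm (T - T') * n\<^sup>2"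
    by (simp add: algebra_simps)
  ultimately show ?thesis using Gy Tx T'x
    unfolding g_def[symmetric] \<beta>_def[symmetric] n_def[symmetric] by linarith
qed

lemma garding_stable:
  fixes T :: "'a::{real_inner,complete_space} \<Rightarrow>\<^sub>L 'a"
  assumes sV: "subspace V" and cV: "closed V" and SV: "S \<subseteq> V"
    and c: "c > 0" and M: "M \<ge> 0" and G: "garding T V S B c M"
  shows "\<exists>\<delta>>0. \<forall>T' V'. subspace V' \<longrightarrow> closed V' \<longrightarrow> norm (T - T') + gdist V V' < \<delta> \<longrightarrow>
           garding T' V' S B (c/2) (2*M)"
proof -
  define L where "L = 2 * c + 2 * M * (\<Sum>b\<in>B. (norm b)\<^sup>2) + 2 * norm T"
  have L0: "L \<ge> 0" using c M by (simp add: L_def sum_nonneg)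
  define \<delta> where "\<delta> = min 1 (c / (2 * (L + 1)))"
  have d0: "\<delta> > 0" using c L0 by (simp add: \<delta>_def)
  have "garding T' V' S B (c/2) (2*M)"
    if sV': "subspace V'" and cV': "closed V'" and small: "norm (T - T') + gdist V V' < \<delta>" for T' V'
    unfolding garding_def
  proof (intro ballI impI)
    fix x assume x: "x \<in> V'" "\<forall>s\<in>S. inner x s = 0"
    define g where "g = gdist V V'"
    have g0: "g \<ge> 0" unfolding g_def by (rule gdist_nonneg[OF sV cV sV' cV'])
    have g1: "g \<le> 1"
      using small norm_ge_zero[of "T - T'"] min.cobounded1[of 1] unfolding g_def \<delta>_def by linarith
    have "L * g + norm (T - T') \<le> (L + 1) * (norm (T - T') + g)"
      using L0 g0 by (simp add: algebra_simps)
    also have "\<dots> \<le> (L + 1) * \<delta>" using small L0 by (intro mult_left_mono) (auto simp: g_def)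
    also have "\<dots> \<le> (L + 1) * (c / (2 * (L + 1)))" using L0 by (intro mult_left_mono) (auto simp: \<delta>_def)
    also have "\<dots> = c / 2" using L0 by (simp add: field_simps)
    finally have "c / 2 * (norm x)\<^sup>2 \<le> (c - L * g - norm (T - T')) * (norm x)\<^sup>2"
      by (intro mult_right_mono) auto
    moreover have "(c - L * g - norm (T - T')) * (norm x)\<^sup>2 - 2 * M * (\<Sum>b\<in>B. (inner x b)\<^sup>2)
        \<le> inner (T' x) x"
      using garding_transfer[OF sV cV sV' cV' SV _ M G _ x] c g1 unfolding L_def g_def by simp
    ultimately show "c / 2 * (norm x)\<^sup>2 - 2 * M * (\<Sum>b\<in>B. (inner x b)\<^sup>2) \<le> inner (T' x) x"
      by linarith
  qed
  then show ?thesis using d0 by blast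
qed

lemma form_ker_subspace:
  fixes T :: "'a::real_inner \<Rightarrow>\<^sub>L 'a"
  assumes sV: "subspace V"
  shows "subspace (form_ker T V)"
  unfolding subspace_def form_ker_def
  using sV by (auto simp: subspace_0 subspace_add subspace_scale blinfun.add_right blinfun.scaleR_right
      inner_add_left)

text \<open>The form
  is \<le> 0 on W + ker, so W + ker meets S^\<bottom> only in 0.\<close>
lemma negative_and_kernel_card_bound:
  fixes T :: "'a::real_inner \<Rightarrow>\<^sub>L 'a"
  assumes sa: "selfadjoint T" and sV: "subspace V" and fS: "finite S"
    and pos: "\<forall>x\<in>V. (\<forall>s\<in>S. inner x s = 0) \<longrightarrow> x \<noteq> 0 \<longrightarrow> inner (T x) x > 0"
    and W: "subspace W" "W \<subseteq> V" "\<forall>x\<in>W. x \<noteq> 0 \<longrightarrow> inner (T x) x < 0"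
    and E1: "finite E1" "independent E1" "E1 \<subseteq> W"
    and E2: "finite E2" "independent E2" "E2 \<subseteq> form_ker T V"
  shows "card E1 + card E2 \<le> card S"
proof -
  define K where "K = form_ker T V"
  have sK: "subspace K" unfolding K_def by (rule form_ker_subspace[OF sV])
  have KV: "K \<subseteq> V" unfolding K_def form_ker_def by auto
  have sp1: "span E1 \<subseteq> W" using W(1) E1(3) by (simp add: span_minimal)
  have sp2: "span E2 \<subseteq> K" using sK E2(3)[folded K_def] by (simp add: span_minimal)
  have "span E1 \<inter> span E2 \<subseteq> {0}"
  proof
    fix z assume z: "z \<in> span E1 \<inter> span E2"
    then have "z \<in> K" "z \<in> W" using sp1 sp2 by auto
    then have "inner (T z) z = 0" using KV unfolding K_def by (auto simp: form_ker_def)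
    then have "z = 0" using W(3) \<open>z \<in> W\<close> by (metis less_irrefl)
    then show "z \<in> {0}" by simp
  qed
  then have iu: "independent (E1 \<union> E2) \<and> E1 \<inter> E2 = {}"
    using indep_union[OF E2(1) E1(2) E2(2)] by blast
  have "\<forall>x\<in>span (E1 \<union> E2). (\<forall>s\<in>S. inner x s = 0) \<longrightarrow> x = 0"
  proof (intro ballI impI)
    fix x assume x: "x \<in> span (E1 \<union> E2)" and xS: "\<forall>s\<in>S. inner x s = 0"
    then obtain a k where ak: "x = a + k" "a \<in> span E1" "k \<in> span E2" by (auto simp: span_Un)
    have aW: "a \<in> W" and kK: "k \<in> K" using ak sp1 sp2 by auto
    have aV: "a \<in> V" and kV: "k \<in> V" using aW kK W(2) KV by auto
    have xV: "x \<in> V" using aV kV ak(1) sV by (simp add: subspace_add)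
    have k1: "inner (T k) a = 0" and k2: "inner (T k) k = 0"
      using kK aV kV unfolding K_def by (auto simp: form_ker_def)
    have k3: "inner (T a) k = 0" using sa k1 unfolding selfadjoint_def by (simp add: inner_commute)
    have "inner (T x) x = inner (T a) a"
      using k1 k2 k3 by (simp add: ak(1) blinfun.add_right inner_add_left inner_add_right)
    moreover have "inner (T a) a \<le> 0" using W(3) aW by (cases "a = 0") (auto intro: less_imp_le)
    ultimately have le: "inner (T x) x \<le> 0" by simp
    show "x = 0"
    proof (rule ccontr)
      assume "x \<noteq> 0"
      then have "inner (T x) x > 0" using pos xV xS by blast
      then show False using le by simp
    qed
  qed
  then have "finite (E1 \<union> E2) \<and> card (E1 \<union> E2) \<le> card S"
    using card_le_orth[OF fS, of "E1 \<union> E2"] iu by simp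
  then have "card (E1 \<union> E2) \<le> card S" by simp
  then show ?thesis using iu E1(1) E2(1) by (simp add: card_Un_disjoint)
qed

lemma index_bound_by_constraints:
  fixes T :: "'a::real_inner \<Rightarrow>\<^sub>L 'a"
  assumes sa: "selfadjoint T" and sV: "subspace V" and fS: "finite S"
    and pos: "\<forall>x\<in>V. (\<forall>s\<in>S. inner x s = 0) \<longrightarrow> x \<noteq> 0 \<longrightarrow> inner (T x) x > 0"
  shows "n_minus T V + edim (form_ker T V) \<le> enat (card S)"
proof -
  define K where "K = form_ker T V"
  have edims: "edim W + edim K \<le> enat (card S)"
    if W: "subspace W" "W \<subseteq> V" "\<forall>x\<in>W. x \<noteq> 0 \<longrightarrow> inner (T x) x < 0" for W
    unfolding edim_def
  proof (rule sup_add_bound)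
    have "enat (card ({}::'a set)) \<in> {enat (card E) |E. finite E \<and> independent E \<and> E \<subseteq> W}"
      by (intro CollectI exI[of _ "{}"]) (simp add: independent_empty)
    then show "{enat (card E) |E. finite E \<and> independent E \<and> E \<subseteq> W} \<noteq> {}" by (metis empty_iff)
    have "enat (card ({}::'a set)) \<in> {enat (card E) |E. finite E \<and> independent E \<and> E \<subseteq> K}"
      by (intro CollectI exI[of _ "{}"]) (simp add: independent_empty)
    then show "{enat (card E) |E. finite E \<and> independent E \<and> E \<subseteq> K} \<noteq> {}" by (metis empty_iff)
    fix x y assume "x \<in> {enat (card E) |E. finite E \<and> independent E \<and> E \<subseteq> W}"
      "y \<in> {enat (card E) |E. finite E \<and> independent E \<and> E \<subseteq> K}"
    then obtain E1 E2 where E: "x = enat (card E1)" "finite E1" "independent E1" "E1 \<subseteq> W"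
      "y = enat (card E2)" "finite E2" "independent E2" "E2 \<subseteq> K" by auto
    have "card E1 + card E2 \<le> card S"
      by (rule negative_and_kernel_card_bound[OF sa sV fS pos W E(2-4) E(6,7) E(8)[unfolded K_def]])
    then show "x + y \<le> enat (card S)" using E by simp
  qed
  have "Sup {edim W | W. subspace W \<and> W \<subseteq> V \<and> (\<forall>x\<in>W. x \<noteq> 0 \<longrightarrow> inner (T x) x < 0)} + Sup {edim K}
      \<le> enat (card S)"
  proof (rule sup_add_bound)
    have "subspace {0::'a}" by (simp add: subspace_def)
    moreover have "{0::'a} \<subseteq> V" using sV by (simp add: subspace_0)
    ultimately have "edim {0::'a} \<in> {edim W | W. subspace W \<and> W \<subseteq> V \<and> (\<forall>x\<in>W. x \<noteq> 0 \<longrightarrow> inner (T x) x < 0)}"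
      by (intro CollectI exI[of _ "{0}"]) simp
    then show "{edim W | W. subspace W \<and> W \<subseteq> V \<and> (\<forall>x\<in>W. x \<noteq> 0 \<longrightarrow> inner (T x) x < 0)} \<noteq> {}"
      by (metis empty_iff)
    show "{edim K} \<noteq> {}" by simp
    fix x y assume "x \<in> {edim W | W. subspace W \<and> W \<subseteq> V \<and> (\<forall>x\<in>W. x \<noteq> 0 \<longrightarrow> inner (T x) x < 0)}"
      "y \<in> {edim K}"
    then obtain W where W: "x = edim W" "subspace W" "W \<subseteq> V" "\<forall>z\<in>W. z \<noteq> 0 \<longrightarrow> inner (T z) z < 0" "y = edim K"
      by auto
    have "x + y = edim W + edim K" using W by simp
    also have "\<dots> \<le> enat (card S)" by (rule edims[OF W(2-4)])
    finally show "x + y \<le> enat (card S)" .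
  qed
  then show ?thesis unfolding n_minus_def K_def by simp
qed

lemma AA_D:
  assumes "(T, V) \<in> AA"
  shows "selfadjoint T" "subspace V" "closed V" "ess_pos T V"
  using assms by (auto simp: AA_def Bs_def Gr_def)

lemma AA_garding:
  assumes "(T, V) \<in> AA"
  obtains B c M where "finite B" "c > 0" "M \<ge> 0" "garding T V {} B c M"
  using ess_pos_imp_garding[OF AA_D(2,4)[OF assms]] by blast

text \<open>Openness of AA: the Garding inequality of a point of AA survives nearby, and it
  characterises essential positivity.\<close>
lemma AA_open:
  fixes T :: "'a::{real_inner,complete_space} \<Rightarrow>\<^sub>L 'a"
  assumes TV: "(T, V) \<in> AA"
  shows "\<exists>e>0. \<forall>q \<in> Bs \<times> Gr. pdist (T, V) q < e \<longrightarrow> q \<in> AA"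
proof -
  obtain B c M where B: "finite B" "c > 0" "M \<ge> 0" "garding T V {} B c M" by (rule AA_garding[OF TV])
  obtain \<delta> where d: "\<delta> > 0" and near: "\<forall>T' V'. subspace V' \<longrightarrow> closed V' \<longrightarrow>
      norm (T - T') + gdist V V' < \<delta> \<longrightarrow> garding T' V' {} B (c/2) (2*M)"
    using garding_stable[OF AA_D(2,3)[OF TV] _ B(2,3,4)] by auto
  have "(T', V') \<in> AA" if q: "(T', V') \<in> Bs \<times> Gr" and small: "pdist (T, V) (T', V') < \<delta>" for T' V'
  proof -
    have sa': "selfadjoint T'" and sV': "subspace V'" and cV': "closed V'"
      using q by (auto simp: Bs_def Gr_def)
    have "garding T' V' {} B (c/2) (2*M)" using near sV' cV' small by (simp add: pdist_def)
    then have "ess_pos T' V'" using garding_imp_ess_pos[OF sV' cV' sa' B(1), of "c/2" "2*M"] B(2) by simp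
    then show ?thesis using q by (simp add: AA_def)
  qed
  then show ?thesis using d by fast
qed

text \<open>Finiteness of the indices: by the Garding inequality, T is positive definite on
  V \<inter> B^\<bottom>.\<close>
lemma AA_indices_finite:
  fixes T :: "'a::real_inner \<Rightarrow>\<^sub>L 'a"
  assumes TV: "(T, V) \<in> AA"
  shows "n_minus T V \<noteq> \<infinity> \<and> edim (form_ker T V) \<noteq> \<infinity>"
proof -
  obtain B c M where B: "finite B" "c > 0" "M \<ge> 0" "garding T V {} B c M" by (rule AA_garding[OF TV])
  have "n_minus T V + edim (form_ker T V) \<le> enat (card B)"
    using index_bound_by_constraints[OF AA_D(1,2)[OF TV] B(1)] garding_pos[OF B(4,2)] by simp
  then show ?thesis by (auto simp: plus_enat_def split: enat.splits)
qed

lemma semidefinite_null_vector_radical: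
  fixes T :: "'a::real_inner \<Rightarrow>\<^sub>L 'a"
  assumes sa: "selfadjoint T" and sW: "subspace W" and nn: "\<forall>w\<in>W. inner (T w) w \<ge> 0"
    and x: "x \<in> W" and x0: "inner (T x) x = 0" and w: "w \<in> W"
  shows "inner (T x) w = 0"
proof -
  have Twx: "inner (T w) x = inner (T x) w" using sa unfolding selfadjoint_def by (simp add: inner_commute)
  have "0 \<le> t * (2 * inner (T x) w) + t\<^sup>2 * inner (T w) w" for t
  proof -
    have "x + t *\<^sub>R w \<in> W" using sW x w by (simp add: subspace_add subspace_scale)
    then have "0 \<le> inner (T (x + t *\<^sub>R w)) (x + t *\<^sub>R w)" using nn by blast
    then show ?thesis using x0 Twx
      by (simp add: blinfun.add_right blinfun.scaleR_right inner_add_left inner_add_right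
          power2_eq_square algebra_simps)
  qed
  then show ?thesis using quadratic_nonneg_imp_linear_zero by fastforce
qed

lemma not_coercive_imp_almost_null_sequence:
  fixes T :: "'a::real_inner \<Rightarrow>\<^sub>L 'a"
  assumes sW: "subspace W" and nc: "\<not> (\<exists>c>0. \<forall>x\<in>W. c * (norm x)\<^sup>2 \<le> inner (T x) x)"
  obtains u where "\<And>j. u j \<in> W" "\<And>j. norm (u j) = 1" "\<And>j. inner (T (u j)) (u j) < 1 / (real j + 1)"
proof -
  have "\<exists>u. u \<in> W \<and> norm u = 1 \<and> inner (T u) u < 1 / (real j + 1)" for j :: nat
  proof -
    have "1 / (real j + 1) > 0" by simp
    then obtain x where "x \<in> W" "\<not> 1 / (real j + 1) * (norm x)\<^sup>2 \<le> inner (T x) x"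
      using nc by blast
    then have x: "x \<in> W" "inner (T x) x < 1 / (real j + 1) * (norm x)\<^sup>2" by auto
    have x0: "x \<noteq> 0" using x(2) by (cases "x = 0") auto
    define u where "u = (1 / norm x) *\<^sub>R x"
    have "u \<in> W" unfolding u_def using sW x(1) by (rule subspace_scale)
    moreover have "norm u = 1" using x0 by (simp add: u_def)
    moreover have "inner (T u) u = inner (T x) x / (norm x)\<^sup>2"
      by (simp add: u_def blinfun.scaleR_right power2_eq_square)
    moreover have "\<dots> < 1 / (real j + 1)" using x(2) x0 by (simp add: divide_less_eq)
    ultimately show ?thesis by auto
  qed
  then have "\<exists>u. \<forall>j. u j \<in> W \<and> norm (u j) = 1 \<and> inner (T (u j)) (u j) < 1 / (real j + 1)"
    by (rule choice[OF allI])
  then show ?thesis using that by blast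
qed

lemma finite_rank_convergent_subseq:
  fixes u :: "nat \<Rightarrow> 'a::real_inner"
  assumes fB: "finite B" and bnd: "\<And>j. norm (u j) \<le> 1"
  obtains r where "strict_mono r" "convergent (\<lambda>j. \<Sum>b\<in>B. inner (u (r j)) b *\<^sub>R b)"
proof -
  define R where "R = (\<Sum>b\<in>B. norm b)"
  define Cs where "Cs = {\<Sum>b\<in>B. f b *\<^sub>R (\<lambda>b. b) b | f. \<forall>b\<in>B. \<bar>f b\<bar> \<le> R}"
  have cCs: "compact Cs" unfolding Cs_def by (rule compact_box_sums[OF fB])
  have uC: "(\<Sum>b\<in>B. inner (u j) b *\<^sub>R b) \<in> Cs" for j
  proof -
    have "\<bar>inner (u j) b\<bar> \<le> R" if b: "b \<in> B" for b
    proof -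
      have "\<bar>inner (u j) b\<bar> \<le> norm (u j) * norm b" by (rule Cauchy_Schwarz_ineq2)
      also have "\<dots> \<le> norm b" using bnd[of j] by (simp add: mult_left_le_one_le)
      also have "\<dots> \<le> R" unfolding R_def by (rule member_le_sum[OF b _ fB]) simp
      finally show ?thesis .
    qed
    then show ?thesis unfolding Cs_def by (intro CollectI exI[of _ "\<lambda>b. inner (u j) b"]) simp
  qed
  then obtain l r where "strict_mono r" "((\<lambda>j. \<Sum>b\<in>B. inner (u j) b *\<^sub>R b) \<circ> r) \<longlonglongrightarrow> l"
    using seq_compactE[OF compact_imp_seq_compact[OF cCs], of "\<lambda>j. \<Sum>b\<in>B. inner (u j) b *\<^sub>R b"] uC
    by blast
  then show ?thesis using that by (auto simp: convergent_def o_def)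
qed

text \<open>Parallelogram estimate under a Garding inequality: for v, w in a subspace W \<subseteq> V on which
  the form is semidefinite, c |v - w|^2 is controlled by the forms of v and w and by the
  finite-rank part \<phi> z = \<Sum>b\<in>B. \<langle>z,b\<rangle> b, since \<langle>T(v+w),v+w\<rangle> \<ge> 0.\<close>
lemma garding_difference_bound:
  fixes T :: "'a::real_inner \<Rightarrow>\<^sub>L 'a"
  assumes sa: "selfadjoint T" and M: "M \<ge> 0" and G: "garding T V {} B c M"
    and sW: "subspace W" and WV: "W \<subseteq> V" and nn: "\<forall>w\<in>W. inner (T w) w \<ge> 0"
    and v: "v \<in> W" "norm v \<le> 1" and w: "w \<in> W" "norm w \<le> 1"
  shows "c * (norm (v - w))\<^sup>2 \<le> 2 * inner (T v) v + 2 * inner (T w) w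
           + 2 * M * norm ((\<Sum>b\<in>B. inner v b *\<^sub>R b) - (\<Sum>b\<in>B. inner w b *\<^sub>R b))"
proof -
  define \<phi> where "\<phi> z = (\<Sum>b\<in>B. inner z b *\<^sub>R b)" for z
  have l\<phi>: "linear \<phi>"
    by (rule linearI) (simp_all add: \<phi>_def inner_add_left scaleR_add_left sum.distrib scaleR_sum_right)
  define d where "d = v - w"
  have dV: "d \<in> V" unfolding d_def using subspace_diff[OF sW v(1) w(1)] WV by blast
  have g: "c * (norm d)\<^sup>2 - M * (\<Sum>b\<in>B. (inner d b)\<^sup>2) \<le> inner (T d) d"
    using gardingD[OF G dV] by simp
  have cross: "inner (T w) v = inner (T v) w" using sa unfolding selfadjoint_def by (simp add: inner_commute)
  have "inner (T d) d + inner (T (v + w)) (v + w) = 2 * inner (T v) v + 2 * inner (T w) w"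
    unfolding d_def using cross
    by (simp add: blinfun.add_right blinfun.diff_right inner_add_left inner_add_right
        inner_diff_left inner_diff_right)
  moreover have "inner (T (v + w)) (v + w) \<ge> 0" using nn subspace_add[OF sW v(1) w(1)] by blast
  ultimately have Td: "inner (T d) d \<le> 2 * inner (T v) v + 2 * inner (T w) w" by linarith
  have nd: "norm d \<le> 2" using norm_triangle_ineq4[of v w] v(2) w(2) unfolding d_def by linarith
  have "(\<Sum>b\<in>B. (inner d b)\<^sup>2) = inner (\<phi> d) d"
    unfolding \<phi>_def inner_sum_left by (simp add: power2_eq_square inner_commute)
  also have "\<dots> \<le> norm (\<phi> d) * norm d" by (rule norm_cauchy_schwarz)
  also have "\<dots> \<le> norm (\<phi> d) * 2" using nd by (rule mult_left_mono) simp
  also have "\<phi> d = \<phi> v - \<phi> w" unfolding d_def by (rule linear_diff[OF l\<phi>])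
  finally have "M * (\<Sum>b\<in>B. (inner d b)\<^sup>2) \<le> M * (norm (\<phi> v - \<phi> w) * 2)"
    using M by (rule mult_left_mono)
  then show ?thesis using g Td unfolding d_def \<phi>_def by (simp add: algebra_simps)
qed

lemma garding_almost_null_Cauchy:
  fixes T :: "'a::real_inner \<Rightarrow>\<^sub>L 'a"
  assumes sa: "selfadjoint T" and c: "c > 0" and M: "M \<ge> 0" and G: "garding T V {} B c M"
    and sW: "subspace W" and WV: "W \<subseteq> V" and nn: "\<forall>w\<in>W. inner (T w) w \<ge> 0"
    and vW: "\<And>j. v j \<in> W" and vn: "\<And>j. norm (v j) = 1"
    and vq: "\<And>j. inner (T (v j)) (v j) < 1 / (real j + 1)"
    and Cphi: "Cauchy (\<lambda>j. \<Sum>b\<in>B. inner (v j) b *\<^sub>R b)"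
  shows "Cauchy v"
proof -
  define \<phi> where "\<phi> z = (\<Sum>b\<in>B. inner z b *\<^sub>R b)" for z
  have key: "c * (norm (v m - v n))\<^sup>2 \<le> 2 / (real m + 1) + 2 / (real n + 1) + 2 * M * norm (\<phi> (v m) - \<phi> (v n))"
    for m n
    using garding_difference_bound[OF sa M G sW WV nn vW _ vW, of m n] vn vq[of m] vq[of n]
    unfolding \<phi>_def by force
  show "Cauchy v"
  proof (rule metric_CauchyI)
    fix e :: real assume e: "e > 0"
    define \<eta> where "\<eta> = c * e\<^sup>2 / (4 * (M + 1))"
    have eta: "\<eta> > 0" using c e M by (simp add: \<eta>_def)
    obtain N1 where N1: "\<forall>m\<ge>N1. \<forall>n\<ge>N1. dist (\<phi> (v m)) (\<phi> (v n)) < \<eta>"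
      using metric_CauchyD[OF Cphi[folded \<phi>_def] eta] by blast
    have ce: "c * e\<^sup>2 > 0" using c e by simp
    obtain N2 :: nat where N2: "8 / (c * e\<^sup>2) < real N2" using reals_Archimedean2 by blast
    show "\<exists>M. \<forall>m\<ge>M. \<forall>n\<ge>M. dist (v m) (v n) < e"
    proof (intro exI[of _ "max N1 N2"] allI impI)
      fix m n assume m: "m \<ge> max N1 N2" and n: "n \<ge> max N1 N2"
      have p1: "norm (\<phi> (v m) - \<phi> (v n)) < \<eta>" using N1 m n by (simp add: dist_norm)
      have N2pos: "real N2 > 0" using N2 ce by (smt (verit) divide_pos_pos)
      have a: "2 / (real m + 1) \<le> 2 / (real N2 + 1)" using m by (simp add: frac_le)
      have b: "2 / (real n + 1) \<le> 2 / (real N2 + 1)" using n by (simp add: frac_le)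
      have cN: "4 / (real N2 + 1) < c * e\<^sup>2 / 2"
      proof -
        have "8 < real N2 * (c * e\<^sup>2)" using N2 ce by (simp add: divide_less_eq)
        then have "8 < (real N2 + 1) * (c * e\<^sup>2)" using ce by (simp add: algebra_simps)
        then show ?thesis using N2pos by (simp add: field_simps)
      qed
      have d: "2 * M * norm (\<phi> (v m) - \<phi> (v n)) \<le> c * e\<^sup>2 / 2"
      proof -
        have "2 * M * norm (\<phi> (v m) - \<phi> (v n)) \<le> 2 * M * \<eta>"
          using p1 M by (intro mult_left_mono) auto
        also have "\<dots> = c * e\<^sup>2 / 2 * (M / (M + 1))" using M by (simp add: \<eta>_def field_simps)
        also have "\<dots> \<le> c * e\<^sup>2 / 2 * 1" using M ce by (intro mult_left_mono) auto
        finally show ?thesis by simp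
      qed
      have "c * (norm (v m - v n))\<^sup>2 < c * e\<^sup>2" using key[of m n] a b cN d by linarith
      then have "(norm (v m - v n))\<^sup>2 < e\<^sup>2" using c by simp
      then have "norm (v m - v n) < e" using e by (simp add: power_less_imp_less_base)
      then show "dist (v m) (v n) < e" by (simp add: dist_norm)
    qed
  qed
qed

text \<open>Under a Garding inequality, a form that is semidefinite on a closed subspace W is
  either coercive on W or has a nonzero null vector in W: an almost-null unit sequence has,
  by compactness of the finite-rank part, a convergent subsequence.\<close>
lemma garding_semidefinite_coercive_or_null:
  fixes T :: "'a::{real_inner,complete_space} \<Rightarrow>\<^sub>L 'a"
  assumes sa: "selfadjoint T" and fB: "finite B" and c: "c > 0" and M: "M \<ge> 0"
    and G: "garding T V {} B c M"
    and sW: "subspace W" and cW: "closed W" and WV: "W \<subseteq> V" and nn: "\<forall>w\<in>W. inner (T w) w \<ge> 0"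
  shows "(\<exists>c>0. \<forall>x\<in>W. c * (norm x)\<^sup>2 \<le> inner (T x) x) \<or> (\<exists>x\<in>W. x \<noteq> 0 \<and> inner (T x) x = 0)"
proof (cases "\<exists>c>0. \<forall>x\<in>W. c * (norm x)\<^sup>2 \<le> inner (T x) x")
  case True
  then show ?thesis by blast
next
  case nc: False
  obtain u where uW: "\<And>j. u j \<in> W" and un: "\<And>j. norm (u j) = 1"
    and uq: "\<And>j. inner (T (u j)) (u j) < 1 / (real j + 1)"
    using not_coercive_imp_almost_null_sequence[OF sW nc] by blast
  obtain r where r: "strict_mono r" and conv: "convergent (\<lambda>j. \<Sum>b\<in>B. inner (u (r j)) b *\<^sub>R b)"
    by (rule finite_rank_convergent_subseq[OF fB, of u]) (simp add: un)
  define v where "v j = u (r j)" for j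
  have vq: "inner (T (v j)) (v j) < 1 / (real j + 1)" for j
  proof -
    have "inner (T (v j)) (v j) < 1 / (real (r j) + 1)" using uq by (simp add: v_def)
    also have "\<dots> \<le> 1 / (real j + 1)" using seq_suble[OF r, of j] by (simp add: frac_le)
    finally show ?thesis .
  qed
  have "Cauchy v"
    by (rule garding_almost_null_Cauchy[OF sa c M G sW WV nn])
      (use uW un vq conv convergent_Cauchy in \<open>auto simp: v_def\<close>)
  then obtain x where vx: "v \<longlonglongrightarrow> x" using Cauchy_convergent_iff convergent_def by blast
  have "v j \<in> W" for j using uW by (simp add: v_def)
  then have xW: "x \<in> W" using closed_sequentially[OF cW] vx by blast
  have "(\<lambda>j. norm (v j)) \<longlonglongrightarrow> norm x" by (rule tendsto_norm[OF vx])
  then have x1: "norm x = 1" using un LIMSEQ_unique[OF _ tendsto_const] by (simp add: v_def)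
  have "(\<lambda>j. inner (T (v j)) (v j)) \<longlonglongrightarrow> inner (T x) x"
    by (intro tendsto_inner bounded_linear.tendsto[OF blinfun.bounded_linear_right] vx)
  then have "inner (T x) x \<le> 0"
    using inverse_Suc_tendsto_zero by (rule LIMSEQ_le) (use vq in \<open>auto intro: less_imp_le\<close>)
  moreover have "inner (T x) x \<ge> 0" using nn xW by blast
  ultimately show ?thesis using xW x1 by force
qed

text \<open>The map x \<mapsto> \<Sum>s\<in>S. \<langle>x,s\<rangle> s is injective on span EU, so it maps
  span EU onto span S.\<close>
lemma complement_of_constraints:
  fixes S EU :: "'a::real_inner set"
  assumes fS: "finite S" and fEU: "finite EU" and iEU: "independent EU" and card: "card S \<le> card EU"
    and triv: "\<forall>u\<in>span EU. (\<forall>s\<in>S. inner u s = 0) \<longrightarrow> u = 0"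
  shows "\<exists>u\<in>span EU. \<forall>s\<in>S. inner (y - u) s = 0"
proof -
  define L where "L y = (\<Sum>s\<in>S. inner y s *\<^sub>R s)" for y
  have lL: "linear L"
    by (rule linearI) (simp_all add: L_def inner_add_left scaleR_add_left sum.distrib scaleR_sum_right)
  have L0: "\<forall>s\<in>S. inner y s = 0" if "L y = 0" for y
  proof -
    have "inner (L y) y = (\<Sum>s\<in>S. (inner y s)\<^sup>2)"
      unfolding L_def inner_sum_left by (simp add: power2_eq_square inner_commute)
    then have "(\<Sum>s\<in>S. (inner y s)\<^sup>2) = 0" using that by simp
    then have "\<forall>s\<in>S. (inner y s)\<^sup>2 = 0" using sum_nonneg_eq_0_iff[OF fS, of "\<lambda>s. (inner y s)\<^sup>2"] by simp
    then show ?thesis by simp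
  qed
  have "\<forall>u\<in>span EU. L u = 0 \<longrightarrow> u = 0" using L0 triv by blast
  then have inj: "inj_on L (span EU)" using linear_inj_on_iff_eq_0[OF lL subspace_span] by blast
  have iLE: "independent (L ` EU)" by (rule linear_independent_injective_image[OF lL iEU inj])
  have cLE: "card (L ` EU) = card EU" using card_image[OF inj_on_subset[OF inj span_superset]] by simp
  have Lspan: "L z \<in> span S" for z
    unfolding L_def by (rule span_sum, rule span_scale, rule span_base)
  have sp: "span S \<subseteq> span (L ` EU)"
  proof
    fix z assume z: "z \<in> span S"
    show "z \<in> span (L ` EU)"
    proof (rule ccontr)
      assume zn: "z \<notin> span (L ` EU)"
      have "insert z (L ` EU) \<subseteq> span S" using z Lspan by (simp add: image_subset_iff)
      then have "card (insert z (L ` EU)) \<le> card S"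
        using independent_span_bound[OF fS independent_insertI[OF zn iLE]] by simp
      moreover have "z \<notin> L ` EU" using zn span_base[of z "L ` EU"] by auto
      then have "card (insert z (L ` EU)) = card EU + 1" using fEU cLE by simp
      ultimately show False using card by linarith
    qed
  qed
  have "L y \<in> span (L ` EU)" by (rule subsetD[OF sp Lspan])
  then have "L y \<in> L ` span EU" using linear_span_image[OF lL] by simp
  then obtain u where u: "u \<in> span EU" "L y = L u" by auto
  then have "L (y - u) = 0" using linear_diff[OF lL] by simp
  then show ?thesis using u(1) L0[of "y - u"] by blast
qed

lemma negative_span_insert:
  fixes T :: "'a::real_inner \<Rightarrow>\<^sub>L 'a"
  assumes sa: "selfadjoint T" and negN: "\<forall>x\<in>span EN. x \<noteq> 0 \<longrightarrow> inner (T x) x < 0"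
    and orth: "\<forall>m\<in>span EN. inner (T m) x = 0" and neg': "inner (T x) x < 0"
  shows "\<forall>y\<in>span (insert x EN). y \<noteq> 0 \<longrightarrow> inner (T y) y < 0"
proof (intro ballI impI)
  fix y assume y: "y \<in> span (insert x EN)" and y0: "y \<noteq> 0"
  obtain t where m: "y - t *\<^sub>R x \<in> span EN" using y unfolding span_breakdown_eq by blast
  define m where "m = y - t *\<^sub>R x"
  have mN: "m \<in> span EN" using m by (simp add: m_def)
  have ym: "y = m + t *\<^sub>R x" by (simp add: m_def)
  have a1: "inner (T m) x = 0" using orth mN by blast
  have "inner (T x) m = inner x (T m)" using sa unfolding selfadjoint_def by blast
  then have a2: "inner (T x) m = 0" using a1 by (simp add: inner_commute)
  have eq: "inner (T y) y = inner (T m) m + t\<^sup>2 * inner (T x) x"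
    unfolding ym using a1 a2
    by (simp add: blinfun.add_right blinfun.scaleR_right inner_add_left inner_add_right power2_eq_square)
  have mle: "inner (T m) m \<le> 0" using negN mN by (cases "m = 0") (auto intro: less_imp_le)
  show "inner (T y) y < 0"
  proof (cases "t = 0")
    case True
    then have "m \<noteq> 0" using y0 ym by simp
    then have "inner (T m) m < 0" using negN mN by blast
    then show ?thesis using eq True by simp
  next
    case False
    then have "t\<^sup>2 * inner (T x) x < 0" using neg' by (simp add: mult_pos_neg)
    then show ?thesis using eq mle by simp
  qed
qed

text \<open>The constraints are the
  vectors P_V (T e), e \<in> EN, and EK; on the constrained space (vectors of V orthogonal to
  all constraints) T turns out to be coercive, and card constraints \<le> n_minus + dim ker.\<close>

context
  fixes T :: "'a::{real_inner,complete_space} \<Rightarrow>\<^sub>L 'a" and V EN EK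
  assumes sa: "selfadjoint T" and sV: "subspace V" and cV: "closed V"
    and fEN: "finite EN" and iEN: "independent EN" and spEN: "span EN \<subseteq> V"
    and negN: "\<forall>x\<in>span EN. x \<noteq> 0 \<longrightarrow> inner (T x) x < 0"
    and maxN: "n_minus T V = enat (card EN)"
    and fEK: "finite EK" and iEK: "independent EK" and spEK: "span EK = form_ker T V"
begin

definition constraints :: "'a set" where
  "constraints = (\<lambda>e. oproj V (T e)) ` EN \<union> EK"

definition constrained :: "'a set" where
  "constrained = {x\<in>V. \<forall>s\<in>constraints. inner x s = 0}"

lemma ker_in_V: "\<kappa> \<in> span EK \<Longrightarrow> \<kappa> \<in> V"
  using spEK by (auto simp: form_ker_def)

lemma ker_form_zero: "\<kappa> \<in> span EK \<Longrightarrow> y \<in> V \<Longrightarrow> inner (T \<kappa>) y = 0"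
  using spEK by (auto simp: form_ker_def)

lemma neg_basis_in_V: "EN \<subseteq> V" using spEN span_superset by blast

lemma ker_basis_in_V: "EK \<subseteq> V" using ker_in_V span_superset by blast

lemma constraints_finite: "finite constraints" unfolding constraints_def using fEN fEK by simp

lemma constraints_in_V: "constraints \<subseteq> V"
  unfolding constraints_def using ker_basis_in_V oproj_in[OF sV cV] by blast

lemma constraints_card: "card constraints \<le> card EN + card EK"
proof -
  have "card constraints \<le> card ((\<lambda>e. oproj V (T e)) ` EN) + card EK"
    unfolding constraints_def by (rule card_Un_le)
  also have "card ((\<lambda>e. oproj V (T e)) ` EN) \<le> card EN" using fEN by (rule card_image_le)
  finally show ?thesis by simp
qed

lemma constrained_in_V: "constrained \<subseteq> V" unfolding constrained_def by blast

lemma constrained_subspace: "subspace constrained"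
  unfolding subspace_def constrained_def
  using sV by (auto simp: subspace_0 subspace_add subspace_scale inner_add_left)

lemma constrained_closed: "closed constrained"
proof -
  have "constrained = V \<inter> (\<Inter>s\<in>constraints. {x. inner s x = 0})" unfolding constrained_def by (auto simp: inner_commute)
  then show ?thesis using cV by (simp add: closed_INT closed_hyperplane closed_Int)
qed

lemma constrained_form_orth_neg: assumes x: "x \<in> constrained" and m: "m \<in> span EN" shows "inner (T m) x = 0"
proof -
  have lin: "linear (\<lambda>m. inner (T m) x)"
    by (rule linearI) (simp_all add: blinfun.add_right blinfun.scaleR_right inner_add_left)
  have "inner (T e) x = 0" if e: "e \<in> EN" for e
  proof -
    have xV: "x \<in> V" using x constrained_in_V by blast
    have "inner (T e) x = inner (oproj V (T e)) x" using oproj_inner[OF sV cV xV] by simp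
    also have "\<dots> = inner x (oproj V (T e))" by (simp add: inner_commute)
    also have "\<dots> = 0" using x e unfolding constrained_def constraints_def by blast
    finally show ?thesis .
  qed
  then show ?thesis using linear_eq_0_on_span[OF lin _ m] by blast
qed

lemma constrained_orth_ker: assumes x: "x \<in> constrained" and k: "\<kappa> \<in> span EK" shows "inner x \<kappa> = 0"
proof -
  have lin: "linear (\<lambda>k. inner x k)"
    by (rule linearI) (simp_all add: inner_add_right)
  have "inner x e = 0" if e: "e \<in> EK" for e using x e unfolding constrained_def constraints_def by blast
  then show ?thesis using linear_eq_0_on_span[OF lin _ k] by blast
qed

text \<open>By maximality of EN, the form is nonnegative on the constrained space: a negative
  vector x there would enlarge EN, since x is T-orthogonal to span EN.\<close>
lemma constrained_nonneg: assumes x: "x \<in> constrained" shows "inner (T x) x \<ge> 0"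
proof (rule ccontr)
  assume neg: "\<not> inner (T x) x \<ge> 0"
  then have neg': "inner (T x) x < 0" by simp
  have xV: "x \<in> V" using x constrained_in_V by blast
  have xn: "x \<notin> span EN"
  proof
    assume "x \<in> span EN"
    then have "inner (T x) x = 0" using constrained_form_orth_neg[OF x] by blast
    then show False using neg' by simp
  qed
  define E' where "E' = insert x EN"
  have fE': "finite E'" using fEN by (simp add: E'_def)
  have iE': "independent E'" unfolding E'_def using xn iEN by (rule independent_insertI)
  have cE': "card E' = card EN + 1"
  proof -
    have "x \<notin> EN" using xn span_superset by blast
    then show ?thesis using fEN by (simp add: E'_def)
  qed
  have spE': "span E' \<subseteq> V"
  proof (rule span_minimal)
    show "E' \<subseteq> V" using xV neg_basis_in_V by (simp add: E'_def)
  qed (rule sV)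
  have "\<forall>m\<in>span EN. inner (T m) x = 0" using constrained_form_orth_neg[OF x] by blast
  then have nd: "\<forall>y\<in>span E'. y \<noteq> 0 \<longrightarrow> inner (T y) y < 0"
    unfolding E'_def by (rule negative_span_insert[OF sa negN _ neg'])
  have "enat (card E') \<le> n_minus T V" by (rule negative_span_le_n_minus[OF fE' iE' spE' nd])
  then have "card E' \<le> card EN" using maxN by simp
  then show False using cE' by simp
qed

lemma neg_ker_disjoint: "span EN \<inter> span EK \<subseteq> {0}"
proof
  fix z assume z: "z \<in> span EN \<inter> span EK"
  then have "inner (T z) z = 0" using ker_form_zero[of z z] ker_in_V by blast
  then have "z = 0" using negN z by (metis IntD1 less_irrefl)
  then show "z \<in> {0}" by simp
qed

lemma constrained_meets_neg_ker_trivially: assumes z: "z \<in> span (EN \<union> EK)" "z \<in> constrained" shows "z = 0"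
proof -
  obtain m k where mk: "z = m + k" "m \<in> span EN" "k \<in> span EK" using z(1) by (auto simp: span_Un)
  have mV: "m \<in> V" using mk spEN by blast
  have "inner (T m) z = 0" by (rule constrained_form_orth_neg[OF z(2) mk(2)])
  moreover have "inner (T z) m = inner z (T m)" using sa unfolding selfadjoint_def by blast
  ultimately have "inner (T z) m = 0" by (simp add: inner_commute)
  moreover have "inner (T z) m = inner (T m) m + inner (T k) m"
    by (simp add: mk(1) blinfun.add_right inner_add_left)
  moreover have "inner (T k) m = 0" by (rule ker_form_zero[OF mk(3) mV])
  ultimately have "inner (T m) m = 0" by simp
  then have m0: "m = 0" using negN mk(2) by (metis less_irrefl)
  then have zk: "z = k" using mk by simp
  have "inner z z = 0" using constrained_orth_ker[OF z(2)] mk(3) zk by simp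
  then show ?thesis by simp
qed

lemma constrained_complement:
  assumes y: "y \<in> V"
  shows "\<exists>u\<in>span (EN \<union> EK). y - u \<in> constrained"
proof -
  have iu: "independent (EN \<union> EK) \<and> EN \<inter> EK = {}" by (rule indep_union[OF fEK iEN iEK neg_ker_disjoint])
  have UV: "span (EN \<union> EK) \<subseteq> V" using neg_basis_in_V ker_basis_in_V sV by (simp add: span_minimal)
  have "card constraints \<le> card (EN \<union> EK)"
    using constraints_card iu fEN fEK by (simp add: card_Un_disjoint)
  moreover have "\<forall>u\<in>span (EN \<union> EK). (\<forall>s\<in>constraints. inner u s = 0) \<longrightarrow> u = 0"
  proof (intro ballI impI)
    fix u assume "u \<in> span (EN \<union> EK)" "\<forall>s\<in>constraints. inner u s = 0"
    moreover from this(1) have "u \<in> V" using UV by blast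
    ultimately show "u = 0" using constrained_meets_neg_ker_trivially unfolding constrained_def by simp
  qed
  moreover have "finite (EN \<union> EK)" using fEN fEK by simp
  ultimately obtain u where u: "u \<in> span (EN \<union> EK)" "\<forall>s\<in>constraints. inner (y - u) s = 0"
    using complement_of_constraints[OF constraints_finite _ conjunct1[OF iu], of y] by blast
  have "y - u \<in> V" using y UV u(1) sV by (auto intro: subspace_diff)
  then show ?thesis using u unfolding constrained_def by blast
qed

text \<open>A null vector of the form in the constrained space lies in the kernel, hence is 0:
  it is T-orthogonal to the constrained space (radical lemma), to span EN and to the
  kernel, and these together span V.\<close>
lemma constrained_null_vector:
  assumes x: "x \<in> constrained" and x0: "inner (T x) x = 0"
  shows "x = 0"
proof -
  have xV: "x \<in> V" using x constrained_in_V by blast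
  have rad: "inner (T x) w = 0" if "w \<in> constrained" for w
    by (rule semidefinite_null_vector_radical[OF sa constrained_subspace _ x x0 that])
      (use constrained_nonneg in blast)
  have lin: "linear (\<lambda>u. inner (T x) u)" by (rule linearI) (simp_all add: inner_add_right)
  have van: "inner (T x) e = 0" if e: "e \<in> EN \<union> EK" for e
  proof -
    have "inner (T x) e = inner (T e) x" using sa unfolding selfadjoint_def by (simp add: inner_commute)
    also have "\<dots> = 0"
    proof (cases "e \<in> EN")
      case True
      then show ?thesis using constrained_form_orth_neg[OF x span_base] by blast
    next
      case False
      then show ?thesis using e ker_form_zero[OF span_base xV] by blast
    qed
    finally show ?thesis .
  qed
  have "\<forall>y\<in>V. inner (T x) y = 0"
  proof
    fix y assume y: "y \<in> V"
    obtain w where w: "w \<in> span (EN \<union> EK)" "y - w \<in> constrained" using constrained_complement[OF y] by blast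
    have "inner (T x) (y - w) = 0" by (rule rad[OF w(2)])
    moreover have "inner (T x) w = 0" using linear_eq_0_on_span[OF lin _ w(1)] van by blast
    ultimately show "inner (T x) y = 0" by (simp add: inner_diff_right)
  qed
  then have "x \<in> span EK" using xV spEK by (simp add: form_ker_def)
  then have "inner x x = 0" by (rule constrained_orth_ker[OF x])
  then show "x = 0" by simp
qed

lemma coercive_off_constraints:
  assumes fB: "finite B" and c: "c > 0" and M: "M \<ge> 0" and G: "garding T V {} B c M"
  shows "\<exists>c>0. garding T V constraints {} c 0"
proof -
  have "(\<exists>c>0. \<forall>x\<in>constrained. c * (norm x)\<^sup>2 \<le> inner (T x) x) \<or>
      (\<exists>x\<in>constrained. x \<noteq> 0 \<and> inner (T x) x = 0)"
    by (rule garding_semidefinite_coercive_or_null[OF sa fB c M G constrained_subspace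
          constrained_closed constrained_in_V]) (use constrained_nonneg in blast)
  moreover have "\<not> (\<exists>x\<in>constrained. x \<noteq> 0 \<and> inner (T x) x = 0)"
    using constrained_null_vector by blast
  ultimately obtain c' where c': "c' > 0" "\<forall>x\<in>constrained. c' * (norm x)\<^sup>2 \<le> inner (T x) x"
    by blast
  have "garding T V constraints {} c' 0"
    unfolding garding_def
  proof (intro ballI impI)
    fix y assume "y \<in> V" "\<forall>s\<in>constraints. inner y s = 0"
    then have "y \<in> constrained" unfolding constrained_def by blast
    then show "c' * (norm y)\<^sup>2 - 0 * (\<Sum>b\<in>{}. (inner y b)\<^sup>2) \<le> inner (T y) y" using c' by simp
  qed
  then show ?thesis using c'(1) by blast
qed

end

lemma coercive_constraint_set:
  fixes T :: "'a::{real_inner,complete_space} \<Rightarrow>\<^sub>L 'a"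
  assumes sa: "selfadjoint T" and sV: "subspace V" and cV: "closed V"
    and nm: "n_minus T V = enat n" and km: "edim (form_ker T V) = enat k"
    and fB: "finite B" and c: "c > 0" and M: "M \<ge> 0" and G: "garding T V {} B c M"
  obtains S c' where "finite S" "S \<subseteq> V" "card S \<le> n + k" "c' > 0" "garding T V S {} c' 0"
proof -
  obtain EN where EN: "finite EN" "independent EN" "card EN = n" "span EN \<subseteq> V"
      "\<forall>x\<in>span EN. x \<noteq> 0 \<longrightarrow> inner (T x) x < 0"
    using n_minus_attained[OF sV nm] by (elim exE conjE)
  have maxN: "n_minus T V = enat (card EN)" using nm EN(3) by simp
  have sK: "subspace (form_ker T V)" by (rule form_ker_subspace[OF sV])
  obtain EK where EK: "finite EK" "independent EK" "card EK = k" "EK \<subseteq> form_ker T V"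
      "form_ker T V \<subseteq> span EK"
    using edim_attained[OF sK km] by (elim exE conjE)
  have spEK: "span EK = form_ker T V" using span_minimal[OF EK(4) sK] EK(5) by (rule antisym)
  note ctx = sa sV cV EN(1,2,4,5) maxN EK(1,2) spEK
  have "\<exists>c'>0. garding T V (constraints T V EN EK) {} c' 0"
    by (rule coercive_off_constraints[OF ctx fB c M G])
  then obtain c' where c': "c' > 0" "garding T V (constraints T V EN EK) {} c' 0" by blast
  have "card (constraints T V EN EK) \<le> card EN + card EK" by (rule constraints_card[OF ctx])
  then have "card (constraints T V EN EK) \<le> n + k" using EN(3) EK(3) by simp
  moreover have "finite (constraints T V EN EK)" by (rule constraints_finite[OF ctx])
  moreover have "constraints T V EN EK \<subseteq> V" by (rule constraints_in_V[OF ctx])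
  ultimately show ?thesis using that c' by blast
qed

text \<open>Upper semicontinuity of n_minus + dim ker on AA: the coercivity off the constraint set
  persists nearby (garding_stable), and then the counting lemma applies.\<close>
lemma index_sum_usc:
  fixes T :: "'a::{real_inner,complete_space} \<Rightarrow>\<^sub>L 'a"
  assumes TV: "(T, V) \<in> AA"
  shows "\<exists>e>0. \<forall>(T', V') \<in> AA. pdist (T, V) (T', V') < e \<longrightarrow>
            n_minus T' V' + edim (form_ker T' V') \<le> n_minus T V + edim (form_ker T V)"
proof -
  note TV' = AA_D[OF TV]
  obtain B c M where B: "finite B" "c > 0" "M \<ge> 0" "garding T V {} B c M" by (rule AA_garding[OF TV])
  obtain n k where nm: "n_minus T V = enat n" and km: "edim (form_ker T V) = enat k"
    using AA_indices_finite[OF TV] by auto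
  obtain S c' where S: "finite S" "S \<subseteq> V" "card S \<le> n + k" "c' > 0" "garding T V S {} c' 0"
    by (rule coercive_constraint_set[OF TV'(1-3) nm km B])
  obtain \<delta> where d: "\<delta> > 0" and near: "\<forall>T' V'. subspace V' \<longrightarrow> closed V' \<longrightarrow>
      norm (T - T') + gdist V V' < \<delta> \<longrightarrow> garding T' V' S {} (c'/2) (2*0)"
    using garding_stable[OF TV'(2,3) S(2) S(4) order_refl S(5)] by blast
  have "n_minus T' V' + edim (form_ker T' V') \<le> n_minus T V + edim (form_ker T V)"
    if T'V': "(T', V') \<in> AA" and small: "pdist (T, V) (T', V') < \<delta>" for T' V'
  proof -
    note T'V'' = AA_D[OF T'V']
    have "garding T' V' S {} (c'/2) (2*0)" using near T'V''(2,3) small by (simp add: pdist_def)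
    then have "\<forall>x\<in>V'. (\<forall>s\<in>S. inner x s = 0) \<longrightarrow> x \<noteq> 0 \<longrightarrow> inner (T' x) x > 0"
      using garding_pos[of T' V' S "{}"] S(4) by simp
    then have "n_minus T' V' + edim (form_ker T' V') \<le> enat (card S)"
      by (rule index_bound_by_constraints[OF T'V''(1,2) S(1)])
    also have "\<dots> \<le> n_minus T V + edim (form_ker T V)" using S(3) nm km by simp
    finally show ?thesis .
  qed
  then show ?thesis using d by fast
qed

text \<open>For
  independent E it is a compact subset of span E avoiding 0, and every nonzero vector of
  span E is a positive multiple of one of its points; it replaces the unit sphere of span E,
  whose compactness is not available outside Euclidean spaces.\<close>
definition coeff_sphere :: "'a::real_normed_vector set \<Rightarrow> 'a set" where
  "coeff_sphere E = {\<sigma> *\<^sub>R e0 + (\<Sum>a\<in>E - {e0}. f a *\<^sub>R a) | e0 \<sigma> f.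
      e0 \<in> E \<and> \<sigma> \<in> {-1, 1} \<and> (\<forall>a\<in>E - {e0}. \<bar>f a\<bar> \<le> 1)}"

lemma compact_coeff_sphere:
  fixes E :: "'a::real_normed_vector set"
  assumes fE: "finite E"
  shows "compact (coeff_sphere E)"
proof -
  define C where "C e0 = {\<Sum>a\<in>E - {e0}. f a *\<^sub>R (\<lambda>a. a) a | f. \<forall>a\<in>E - {e0}. \<bar>f a\<bar> \<le> 1}" for e0
  have eq: "coeff_sphere E = (\<Union>e0\<in>E. \<Union>\<sigma>\<in>{-1,1::real}. (\<lambda>y. \<sigma> *\<^sub>R e0 + y) ` C e0)"
    unfolding coeff_sphere_def C_def by blast
  have img: "compact ((\<lambda>y. \<sigma> *\<^sub>R e0 + y) ` C e0)" for e0 \<sigma>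
  proof (rule compact_continuous_image)
    show "continuous_on (C e0) (\<lambda>y. \<sigma> *\<^sub>R e0 + y)" by (intro continuous_intros)
    show "compact (C e0)" unfolding C_def using fE by (intro compact_box_sums) simp
  qed
  show ?thesis unfolding eq
  proof (intro compact_UN)
    show "finite E" by (rule fE)
    show "finite {-1, 1::real}" by simp
  qed (rule img)
qed

lemma coeff_sphere_span: "coeff_sphere E \<subseteq> span E"
proof
  fix z assume "z \<in> coeff_sphere E"
  then obtain e0 \<sigma> f where z: "z = \<sigma> *\<^sub>R e0 + (\<Sum>a\<in>E - {e0}. f a *\<^sub>R a)" "e0 \<in> E"
    unfolding coeff_sphere_def by blast
  have "\<sigma> *\<^sub>R e0 \<in> span E" using z(2) by (intro span_scale span_base)
  moreover have "(\<Sum>a\<in>E - {e0}. f a *\<^sub>R a) \<in> span E"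
    by (intro span_sum span_scale) (auto intro: span_base)
  ultimately show "z \<in> span E" unfolding z(1) by (rule span_add)
qed

lemma coeff_sphere_nonzero:
  fixes E :: "'a::real_normed_vector set"
  assumes fE: "finite E" and iE: "independent E"
  shows "0 \<notin> coeff_sphere E"
proof
  assume "0 \<in> coeff_sphere E"
  then obtain e0 \<sigma> f where z: "0 = \<sigma> *\<^sub>R e0 + (\<Sum>a\<in>E - {e0}. f a *\<^sub>R a)" "e0 \<in> E" "\<sigma> \<in> {-1, 1}"
    unfolding coeff_sphere_def by blast
  define u where "u = f(e0 := \<sigma>)"
  have "(\<Sum>a\<in>E. u a *\<^sub>R a) = u e0 *\<^sub>R e0 + (\<Sum>a\<in>E - {e0}. u a *\<^sub>R a)"
    using fE z(2) by (simp add: sum.remove)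
  also have "(\<Sum>a\<in>E - {e0}. u a *\<^sub>R a) = (\<Sum>a\<in>E - {e0}. f a *\<^sub>R a)"
    by (intro sum.cong) (auto simp: u_def)
  finally have "(\<Sum>a\<in>E. u a *\<^sub>R a) = 0" using z by (simp add: u_def)
  moreover have "u e0 \<noteq> 0" using z(3) by (auto simp: u_def)
  ultimately have "dependent E" unfolding dependent_finite[OF fE] using z(2) by blast
  then show False using iE by simp
qed

lemma coeff_sphere_scaling:
  fixes E :: "'a::real_normed_vector set"
  assumes fE: "finite E" and x: "x \<in> span E" and x0: "x \<noteq> 0"
  shows "\<exists>lm>0. \<exists>z\<in>coeff_sphere E. x = lm *\<^sub>R z"
proof -
  obtain u where xu: "x = (\<Sum>a\<in>E. u a *\<^sub>R a)" using x span_finite[OF fE] by blast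
  have ne: "E \<noteq> {}" using x0 xu by auto
  define lm where "lm = Max ((\<lambda>a. \<bar>u a\<bar>) ` E)"
  have le: "\<bar>u a\<bar> \<le> lm" if "a \<in> E" for a unfolding lm_def using fE that by (intro Max_ge) auto
  have "lm \<in> (\<lambda>a. \<bar>u a\<bar>) ` E" unfolding lm_def using fE ne by (intro Max_in) auto
  then obtain e0 where e0: "e0 \<in> E" "\<bar>u e0\<bar> = lm" by auto
  have lpos: "lm > 0"
  proof (rule ccontr)
    assume "\<not> lm > 0"
    then have "\<forall>a\<in>E. u a = 0" using le by force
    then show False using x0 unfolding xu by simp
  qed
  define \<sigma> where "\<sigma> = u e0 / lm"
  have sig: "\<sigma> \<in> {-1, 1}" using e0(2) lpos by (cases "u e0 \<ge> 0") (auto simp: \<sigma>_def)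
  have "x = u e0 *\<^sub>R e0 + (\<Sum>a\<in>E - {e0}. u a *\<^sub>R a)"
    unfolding xu using fE e0(1) by (simp add: sum.remove)
  also have "\<dots> = lm *\<^sub>R (\<sigma> *\<^sub>R e0 + (\<Sum>a\<in>E - {e0}. (u a / lm) *\<^sub>R a))"
    using lpos by (simp add: \<sigma>_def scaleR_add_right scaleR_sum_right)
  finally have xz: "x = lm *\<^sub>R (\<sigma> *\<^sub>R e0 + (\<Sum>a\<in>E - {e0}. (u a / lm) *\<^sub>R a))" .
  have "\<forall>a\<in>E - {e0}. \<bar>u a / lm\<bar> \<le> 1" using le lpos by (simp add: field_simps)
  then have "\<sigma> *\<^sub>R e0 + (\<Sum>a\<in>E - {e0}. (u a / lm) *\<^sub>R a) \<in> coeff_sphere E"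
    unfolding coeff_sphere_def using e0(1) sig
    by (intro CollectI exI[of _ e0] exI[of _ \<sigma>] exI[of _ "\<lambda>a. u a / lm"]) simp
  then show ?thesis using lpos xz by blast
qed

text \<open>A form that is negative definite on a finite-dimensional span is uniformly so:
  its maximum on the compact coefficient sphere is negative.\<close>
lemma negative_definite_uniform:
  fixes T :: "'a::real_inner \<Rightarrow>\<^sub>L 'a"
  assumes fE: "finite E" and iE: "independent E" and ne: "E \<noteq> {}"
    and neg: "\<forall>x\<in>span E. x \<noteq> 0 \<longrightarrow> inner (T x) x < 0"
  shows "\<exists>c>0. \<forall>x\<in>span E. inner (T x) x \<le> - c * (norm x)\<^sup>2"
proof -
  define Z where "Z = coeff_sphere E"
  have cZ: "compact Z" unfolding Z_def by (rule compact_coeff_sphere[OF fE])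
  have Zspan: "Z \<subseteq> span E" unfolding Z_def by (rule coeff_sphere_span)
  have Z0: "0 \<notin> Z" unfolding Z_def by (rule coeff_sphere_nonzero[OF fE iE])
  have Zmult: "\<exists>lm>0. \<exists>z\<in>Z. x = lm *\<^sub>R z" if "x \<in> span E" "x \<noteq> 0" for x
    unfolding Z_def using coeff_sphere_scaling[OF fE that] .
  obtain e where "e \<in> E" using ne by blast
  then have "e \<in> span E" "e \<noteq> 0" using iE span_base dependent_zero by blast+
  then have Zne: "Z \<noteq> {}" using Zmult by blast
  have "continuous_on Z (blinfun_apply T)"
    by (rule linear_continuous_on[OF blinfun.bounded_linear_right])
  then have cont: "continuous_on Z (\<lambda>z. inner (T z) z)" by (intro continuous_intros)
  obtain zs where zs: "zs \<in> Z" "\<forall>z\<in>Z. inner (T z) z \<le> inner (T zs) zs"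
    using continuous_attains_sup[OF cZ Zne cont] by blast
  define \<mu> where "\<mu> = inner (T zs) zs"
  have "zs \<in> span E" "zs \<noteq> 0" using zs(1) Zspan Z0 by auto
  then have mu: "\<mu> < 0" unfolding \<mu>_def using neg by blast
  obtain R where R: "R > 0" "\<forall>z\<in>Z. norm z \<le> R"
    using compact_imp_bounded[OF cZ] unfolding bounded_pos by blast
  define c where "c = - \<mu> / R\<^sup>2"
  have c: "c > 0" using mu R by (simp add: c_def divide_neg_pos)
  have "inner (T x) x \<le> - c * (norm x)\<^sup>2" if x: "x \<in> span E" for x
  proof (cases "x = 0")
    case False
    then obtain lm z where lpos: "lm > 0" and zZ: "z \<in> Z" and xz: "x = lm *\<^sub>R z"
      using Zmult[OF x False] by blast
    have qz: "inner (T z) z \<le> \<mu>" using zs(2) zZ by (simp add: \<mu>_def)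
    have qx: "inner (T x) x = lm\<^sup>2 * inner (T z) z"
      by (simp add: xz power2_eq_square blinfun.scaleR_right)
    have nx: "(norm x)\<^sup>2 \<le> lm\<^sup>2 * R\<^sup>2"
    proof -
      have "norm x = lm * norm z" using lpos by (simp add: xz)
      also have "\<dots> \<le> lm * R" using R zZ lpos by (intro mult_left_mono) auto
      finally have "norm x \<le> lm * R" .
      then have "(norm x)\<^sup>2 \<le> (lm * R)\<^sup>2" by (rule power_mono) simp
      then show ?thesis by (simp add: power_mult_distrib)
    qed
    have "inner (T x) x \<le> lm\<^sup>2 * \<mu>" unfolding qx by (rule mult_left_mono[OF qz]) simp
    also have "lm\<^sup>2 * \<mu> = (\<mu> / R\<^sup>2) * (lm\<^sup>2 * R\<^sup>2)" using R by (simp add: field_simps)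
    also have "\<dots> \<le> (\<mu> / R\<^sup>2) * (norm x)\<^sup>2"
      using nx mu R by (intro mult_left_mono_neg) (auto simp: divide_nonpos_pos)
    also have "\<mu> / R\<^sup>2 = - c" by (simp add: c_def)
    finally show ?thesis .
  qed simp
  then show ?thesis using c by blast
qed

text \<open>Projecting a uniformly negative span E \<subseteq> V onto a nearby V' keeps the form of a nearby
  T' negative: the defect is at most (2 |T| g + |T - T'|) |x|^2, which is below c |x|^2.\<close>
lemma projection_keeps_negative:
  fixes T T' :: "'a::{real_inner,complete_space} \<Rightarrow>\<^sub>L 'a"
  assumes sV: "subspace V" and cV: "closed V" and sV': "subspace V'" and cV': "closed V'"
    and EV: "span E \<subseteq> V" and unif: "\<forall>x\<in>span E. inner (T x) x \<le> - c * (norm x)\<^sup>2"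
    and small: "(1 + 2 * norm T) * (norm (T - T') + gdist V V') < c"
    and x: "x \<in> span E" "x \<noteq> 0"
  shows "inner (T' (oproj V' x)) (oproj V' x) < 0"
proof -
  define y where "y = oproj V' x"
  define g where "g = gdist V V'"
  define m where "m = norm x"
  have m0: "m > 0" using x by (simp add: m_def)
  have g0: "g \<ge> 0" unfolding g_def by (rule gdist_nonneg[OF sV cV sV' cV'])
  have "oproj V x = x" using x(1) EV oproj_id[OF sV cV] by blast
  then have nyx: "norm (y - x) \<le> g * m"
    using gdist_bound[OF sV cV sV' cV', of x] unfolding y_def g_def m_def by (simp add: norm_minus_commute)
  have ny: "norm y \<le> m" unfolding y_def m_def by (rule oproj_norm[OF sV' cV'])
  have q2: "inner (T y) y \<le> inner (T x) x + 2 * norm T * g * m\<^sup>2"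
  proof -
    have "\<bar>inner (T y) y - inner (T x) x\<bar> \<le> norm T * norm (y - x) * (norm x + norm y)"
      by (rule quad_form_diff_vector)
    also have "\<dots> \<le> norm T * (g * m) * (m + m)"
      using nyx ny g0 by (intro mult_mono mult_left_mono add_mono) (auto simp: m_def)
    finally show ?thesis by (simp add: power2_eq_square algebra_simps)
  qed
  have q3: "inner (T' y) y \<le> inner (T y) y + norm (T - T') * m\<^sup>2"
  proof -
    have "norm (T - T') * (norm y)\<^sup>2 \<le> norm (T - T') * m\<^sup>2"
      using ny by (intro mult_left_mono power_mono) auto
    then show ?thesis using quad_form_diff_operator[of T y T'] by linarith
  qed
  have "(2 * norm T * g + norm (T - T')) * m\<^sup>2 < c * m\<^sup>2"
  proof (rule mult_strict_right_mono)
    have "2 * norm T * g + norm (T - T') \<le> (1 + 2 * norm T) * (norm (T - T') + g)"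
      using g0 by (simp add: algebra_simps)
    then show "2 * norm T * g + norm (T - T') < c" using small unfolding g_def by linarith
  qed (use m0 in simp)
  moreover have "inner (T x) x \<le> - c * m\<^sup>2" using unif x(1) by (simp add: m_def)
  ultimately show ?thesis using q2 q3 unfolding y_def[symmetric] by (simp add: algebra_simps)
qed

text \<open>Lower semicontinuity of n_minus on AA: project a maximal negative span of (T, V)
  onto V'; the projection is injective on it and the image is negative for T'.\<close>
lemma n_minus_lsc:
  fixes T :: "'a::{real_inner,complete_space} \<Rightarrow>\<^sub>L 'a"
  assumes TV: "(T, V) \<in> AA"
  shows "\<exists>e>0. \<forall>(T', V') \<in> AA. pdist (T, V) (T', V') < e \<longrightarrow> n_minus T V \<le> n_minus T' V'"
proof -
  note TV' = AA_D[OF TV]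
  obtain n where nm: "n_minus T V = enat n" using AA_indices_finite[OF TV] by auto
  obtain E where E: "finite E" "independent E" "card E = n" "span E \<subseteq> V"
      "\<forall>x\<in>span E. x \<noteq> 0 \<longrightarrow> inner (T x) x < 0"
    using n_minus_attained[OF TV'(2) nm] by (elim exE conjE)
  show ?thesis
  proof (cases "E = {}")
    case True
    then show ?thesis using nm E(3) by (intro exI[of _ 1]) (auto simp flip: zero_enat_def)
  next
    case False
    obtain c where c: "c > 0" "\<forall>x\<in>span E. inner (T x) x \<le> - c * (norm x)\<^sup>2"
      using negative_definite_uniform[OF E(1,2) False E(5)] by (elim exE conjE)
    define \<delta> where "\<delta> = c / (1 + 2 * norm T)"
    have d0: "\<delta> > 0" unfolding \<delta>_def using c by (intro divide_pos_pos) (auto simp: add_pos_nonneg)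
    have "n_minus T V \<le> n_minus T' V'"
      if T'V': "(T', V') \<in> AA" and small: "pdist (T, V) (T', V') < \<delta>" for T' V'
    proof -
      note T'V'' = AA_D[OF T'V']
      have "(1 + 2 * norm T) * (norm (T - T') + gdist V V') < c"
        using small by (simp add: pdist_def \<delta>_def field_simps add_pos_nonneg)
      then have neg: "inner (T' (oproj V' x)) (oproj V' x) < 0" if "x \<in> span E" "x \<noteq> 0" for x
        using projection_keeps_negative[OF TV'(2,3) T'V''(2,3) E(4) c(2) _ that] by blast
      have lin: "linear (oproj V')" by (rule oproj_linear[OF T'V''(2,3)])
      have "\<forall>x\<in>span E. oproj V' x = 0 \<longrightarrow> x = 0" using neg by force
      then have inj: "inj_on (oproj V') (span E)"
        using linear_inj_on_iff_eq_0[OF lin subspace_span] by blast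
      have "enat (card (oproj V' ` E)) \<le> n_minus T' V'"
      proof (rule negative_span_le_n_minus)
        show "finite (oproj V' ` E)" using E(1) by simp
        show "independent (oproj V' ` E)" by (rule linear_independent_injective_image[OF lin E(2) inj])
        show "span (oproj V' ` E) \<subseteq> V'"
          using oproj_in[OF T'V''(2,3)] by (auto simp: linear_span_image[OF lin])
        show "\<forall>z\<in>span (oproj V' ` E). z \<noteq> 0 \<longrightarrow> inner (T' z) z < 0"
          using neg linear_0[OF lin] by (auto simp: linear_span_image[OF lin])
      qed
      moreover have "card (oproj V' ` E) = n"
        using card_image[OF inj_on_subset[OF inj span_superset]] E(3) by simp
      ultimately show ?thesis using nm by simp
    qed
    then show ?thesis using d0 by fast
  qed
qed

theorem mainTheorem15:
  fixes H :: "'a::{real_inner, complete_space} itself"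
  shows "(\<forall>p \<in> (AA :: (('a \<Rightarrow>\<^sub>L 'a) \<times> 'a set) set).
            \<exists>e>0. \<forall>q \<in> Bs \<times> Gr. pdist p q < e \<longrightarrow> q \<in> AA)
    \<and> (\<forall>(T, V) \<in> (AA :: (('a \<Rightarrow>\<^sub>L 'a) \<times> 'a set) set).
            n_minus T V \<noteq> \<infinity> \<and> edim (form_ker T V) \<noteq> \<infinity>)
    \<and> (\<forall>(T, V) \<in> (AA :: (('a \<Rightarrow>\<^sub>L 'a) \<times> 'a set) set). \<exists>e>0. \<forall>(T', V') \<in> AA.
            pdist (T, V) (T', V') < e \<longrightarrow>
            n_minus T' V' + edim (form_ker T' V') \<le> n_minus T V + edim (form_ker T V))
    \<and> (\<forall>(T, V) \<in> (AA :: (('a \<Rightarrow>\<^sub>L 'a) \<times> 'a set) set). \<exists>e>0. \<forall>(T', V') \<in> AA.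
            pdist (T, V) (T', V') < e \<longrightarrow> n_minus T V \<le> n_minus T' V')"
  using AA_open AA_indices_finite index_sum_usc n_minus_lsc by fast

end
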